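(* Let $0<\varepsilon\le1$ and let $\mathfrak{K}_\varepsilon$ be the linear span of $\{x^n e^{-x^2/(2\sqrt\varepsilon)} : n\in\{0,1,2,\dots\}\}$. Then $\mathfrak{K}_\varepsilon\cap D(S_\varepsilon)=\{0\}$ and $\mathfrak{K}_\varepsilon\cap D(S^*_\varepsilon)=\{0\}$.
   Context: Work in $L^2(\mathbb{R})$ with inner product $(f,g)=\int\overline{f}g\,dx$. Let $q$ be multiplication by $x$ and $p=-i\,d/dx$ (both self-adjoint; $q$ injective). Let $t=q^{-1}p$ with $D(t)=\{f\in D(p): pf\in D(q^{-1})\}$, and $t^*$ its adjoint. Let $L^2_0$ and $L^2_1$ be the subspaces of even and odd functions. Define $S_\varepsilon$ in $L^2_0$ by $D(S_\varepsilon)=\{f\in L^2_0\cap\bigcap_{n\ge0}D(t^{2n+1}): \lim_{N\to\infty}\sum_{n=0}^N\frac{(-1)^n}{2n+1}(\sqrt\varepsilon t)^{2n+1}f$ exists in norm$\}$ and $S_\varepsilon f=-\varepsilon^{-1/2}\sum_{n=0}^\infty\frac{(-1)^n}{2n+1}(\sqrt\varepsilon t)^{2n+1}f$. Define $S^*_\varepsilon$ (notation only, not an adjoint) in $L^2_1$ by the same formulas with $t$ replaced by $t^*$ and $L^2_0$ replaced by $L^2_1$. *)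

theory Defs
  imports "HOL-Analysis.Analysis"
begin

text \<open>Elements of L2(R) are represented by functions real => complex (Borel measurable,
  square integrable); two functions represent the same element iff they agree a.e.
  Unbounded operators are represented by their graphs (relations on representatives).\<close>

type_synonym cfun = "real \<Rightarrow> complex"

definition L2 :: "cfun \<Rightarrow> bool" where
  "L2 f \<longleftrightarrow> f \<in> borel_measurable lborel \<and> integrable lborel (\<lambda>x. (cmod (f x))\<^sup>2)"

definition L2_inner :: "cfun \<Rightarrow> cfun \<Rightarrow> complex" where
  "L2_inner f g = (LINT x|lborel. cnj (f x) * g x)"

definition L2_tendsto :: "(nat \<Rightarrow> cfun) \<Rightarrow> cfun \<Rightarrow> bool" where
  "L2_tendsto s l \<longleftrightarrow> ((\<lambda>N. sqrt (LINT x|lborel. (cmod (s N x - l x))\<^sup>2)) \<longlonglongrightarrow> 0)"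

definition L2_even :: "cfun \<Rightarrow> bool" where
  "L2_even f \<longleftrightarrow> L2 f \<and> (AE x in lborel. f (- x) = f x)"

definition L2_odd :: "cfun \<Rightarrow> bool" where
  "L2_odd f \<longleftrightarrow> L2 f \<and> (AE x in lborel. f (- x) = - f x)"

text \<open>Graph of p = -i d/dx on its self-adjoint domain H^1(R): f has a locally absolutely
  continuous representative u with u(x) = u(0) + int_0^x w, w in L2, and p f = -i w.\<close>
definition p_graph :: "(cfun \<times> cfun) set" where
  "p_graph = {(f, g). L2 f \<and> L2 g \<and>
     (\<exists>u w. L2 w \<and> (AE x in lborel. f x = u x) \<and>
        (\<forall>x. u x = u 0 + (LBINT y=0..x. w y)) \<and>
        (AE x in lborel. g x = - \<i> * w x))}"

definition qinv_graph :: "(cfun \<times> cfun) set" where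
  "qinv_graph = {(h, k). L2 h \<and> L2 k \<and> (AE x in lborel. k x = h x / complex_of_real x)}"

text \<open>t = q^{-1} p with D(t) = {f in D(p) : pf in D(q^{-1})}.\<close>
definition t_graph :: "(cfun \<times> cfun) set" where
  "t_graph = p_graph O qinv_graph"

definition t_adj_graph :: "(cfun \<times> cfun) set" where
  "t_adj_graph = {(g, h). L2 g \<and> L2 h \<and>
     (\<forall>f k. (f, k) \<in> t_graph \<longrightarrow> L2_inner g k = L2_inner h f)}"

text \<open>Domain of S_eps built from operator T (t or t^*) in subspace H (L2_0 or L2_1):
  f in H, f in D(T^(2n+1)) for all n (with values v n), and the partial sums of
  sum (-1)^n/(2n+1) (sqrt eps T)^(2n+1) f converge in norm.\<close>
definition S_dom :: "(cfun \<times> cfun) set \<Rightarrow> (cfun \<Rightarrow> bool) \<Rightarrow> real \<Rightarrow> cfun set" where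
  "S_dom T H \<epsilon> = {f. H f \<and>
     (\<exists>v. (\<forall>n. (f, v n) \<in> T ^^ (2 * n + 1)) \<and>
        (\<exists>l. L2 l \<and> L2_tendsto
           (\<lambda>N x. \<Sum>n\<le>N. complex_of_real ((-1) ^ n / real (2 * n + 1) * sqrt \<epsilon> ^ (2 * n + 1)) * v n x) l))}"

definition K_space :: "real \<Rightarrow> cfun set" where
  "K_space \<epsilon> = {f. \<exists>N (c :: nat \<Rightarrow> complex). f = (\<lambda>x. \<Sum>n<N. c n * complex_of_real (x ^ n * exp (- (x\<^sup>2) / (2 * sqrt \<epsilon>))))}"

end

theory Submission
  imports Defs "HOL-Probability.Distributions" "HOL-Computational_Algebra.Polynomial"
begin

text \<open>
  Write a = sqrt eps. By parity, the even and odd elements of K_eps are the functions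
  x^s P(x^2) e^(-x^2/(2a)) with s = 0, 1 and P a polynomial, and both t (on even functions, read off
  from the graphs of p and 1/x) and t* (on odd ones, by integration by parts against tents supported
  away from 0) act on them by P \<mapsto> -i (2P' - P/a). This keeps the degree and multiplies the leading
  coefficient c by i/a, so the N-th partial sum of the series defining S_eps f is again of this form,
  with leading coefficient i c (1 + 1/3 + ... + 1/(2N+1)). Pairing with |x|^(1-s) sgn(x)^s e^(x^2/(2a) - x^2/y)
  turns L2 convergence of the partial sums into convergence of their moments sum_j b_j j! y^(j+1),
  b_j the coefficients of the polynomial, for every y in (0, 2a), and a q-difference in y isolates
  the leading coefficient; as the odd harmonic series diverges, c = 0.
\<close>

section \<open>Square-integrable functions\<close>

lemma borel_measurable_cnj [measurable]:
  "f \<in> borel_measurable M \<Longrightarrow> (\<lambda>x. cnj (f x)) \<in> borel_measurable M"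
  by (rule borel_measurable_continuous_on[where f=cnj]) (auto intro: continuous_intros)

lemma L2_borel_measurable: "L2 f \<Longrightarrow> f \<in> borel_measurable lborel"
  by (simp add: L2_def)

lemma L2_integrable_square: "L2 f \<Longrightarrow> integrable lborel (\<lambda>x. (cmod (f x))\<^sup>2)"
  by (simp add: L2_def)

lemma L2_dominated:
  assumes "L2 f" "g \<in> borel_measurable lborel" "AE x in lborel. cmod (g x) \<le> C * cmod (f x)"
  shows "L2 g"
proof -
  have "integrable lborel (\<lambda>x. (cmod (g x))\<^sup>2)"
  proof (rule Bochner_Integration.integrable_bound)
    show "integrable lborel (\<lambda>x. C\<^sup>2 * (cmod (f x))\<^sup>2)"
      using assms by (auto simp: L2_def)
    show "AE x in lborel. norm ((cmod (g x))\<^sup>2) \<le> norm (C\<^sup>2 * (cmod (f x))\<^sup>2)"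
      using assms(3)
    proof eventually_elim
      case (elim x)
      then have "(cmod (g x))\<^sup>2 \<le> (C * cmod (f x))\<^sup>2"
        by (intro power_mono) auto
      then show ?case by (simp add: power_mult_distrib)
    qed
  qed (use assms(2) in measurable)
  then show ?thesis using assms by (simp add: L2_def)
qed

lemma L2_zero [simp]: "L2 (\<lambda>x. 0)"
  by (simp add: L2_def)

lemma L2_add:
  assumes "L2 f" "L2 g"
  shows "L2 (\<lambda>x. f x + g x)"
proof -
  have [measurable]: "f \<in> borel_measurable lborel" "g \<in> borel_measurable lborel"
    using assms by (auto simp: L2_def)
  have "integrable lborel (\<lambda>x. (cmod (f x + g x))\<^sup>2)"
  proof (rule Bochner_Integration.integrable_bound)
    show "integrable lborel (\<lambda>x. 2 * (cmod (f x))\<^sup>2 + 2 * (cmod (g x))\<^sup>2)"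
      using assms by (auto simp: L2_def)
    show "AE x in lborel. norm ((cmod (f x + g x))\<^sup>2) \<le> norm (2 * (cmod (f x))\<^sup>2 + 2 * (cmod (g x))\<^sup>2)"
    proof (intro AE_I2)
      fix x
      have "(cmod (f x + g x))\<^sup>2 \<le> (cmod (f x) + cmod (g x))\<^sup>2"
        by (intro power_mono norm_triangle_ineq) auto
      also have "\<dots> \<le> 2 * (cmod (f x))\<^sup>2 + 2 * (cmod (g x))\<^sup>2"
        using sum_squares_bound[of "cmod (f x)" "cmod (g x)"] by (simp add: power2_sum)
      finally show "norm ((cmod (f x + g x))\<^sup>2) \<le> norm (2 * (cmod (f x))\<^sup>2 + 2 * (cmod (g x))\<^sup>2)"
        by simp
    qed
  qed measurable
  then show ?thesis by (simp add: L2_def)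
qed

lemma L2_mult_left:
  assumes "L2 f"
  shows "L2 (\<lambda>x. c * f x)"
proof (rule L2_dominated[OF assms, where C="cmod c"])
  show "(\<lambda>x. c * f x) \<in> borel_measurable lborel"
    using L2_borel_measurable[OF assms] by measurable
qed (simp add: norm_mult)

lemma L2_diff:
  assumes "L2 f" "L2 g"
  shows "L2 (\<lambda>x. f x - g x)"
  using L2_add[OF assms(1) L2_mult_left[OF assms(2), of "-1"]] by simp

lemma L2_sum:
  assumes "\<And>i. i \<in> I \<Longrightarrow> L2 (f i)"
  shows "L2 (\<lambda>x. \<Sum>i\<in>I. f i x)"
  using assms
proof (induction I rule: infinite_finite_induct)
  case (insert i I)
  then show ?case using L2_add[of "f i" "\<lambda>x. \<Sum>i\<in>I. f i x"] by simp
qed simp_all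

lemma L2_cnj:
  assumes "L2 f"
  shows "L2 (\<lambda>x. cnj (f x))"
proof (rule L2_dominated[OF assms, where C=1])
  show "(\<lambda>x. cnj (f x)) \<in> borel_measurable lborel"
    using L2_borel_measurable[OF assms] by measurable
qed simp

lemma L2_indicator_Icc: "L2 (\<lambda>x. complex_of_real (indicator {a..b} x))"
proof -
  have "(\<lambda>x. (cmod (complex_of_real (indicator {a..b} x)))\<^sup>2) = indicator {a..b}"
    by (auto simp: indicator_def fun_eq_iff)
  then show ?thesis
    by (simp add: L2_def integrable_real_indicator emeasure_lborel_Icc_eq)
qed

lemma L2_inner_integrable:
  assumes "L2 f" "L2 g"
  shows "integrable lborel (\<lambda>x. cnj (f x) * g x)"
proof (rule Bochner_Integration.integrable_bound)
  show "integrable lborel (\<lambda>x. ((cmod (f x))\<^sup>2 + (cmod (g x))\<^sup>2) / 2)"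
    using assms by (auto simp: L2_def)
  show "AE x in lborel. norm (cnj (f x) * g x) \<le> norm (((cmod (f x))\<^sup>2 + (cmod (g x))\<^sup>2) / 2)"
  proof (intro AE_I2)
    fix x
    show "norm (cnj (f x) * g x) \<le> norm (((cmod (f x))\<^sup>2 + (cmod (g x))\<^sup>2) / 2)"
      using sum_squares_bound[of "cmod (f x)" "cmod (g x)"] by (simp add: norm_mult power2_eq_square)
  qed
qed (use assms in \<open>auto simp: L2_def\<close>)

lemma L2_set_integrable:
  assumes "L2 w"
  shows "set_integrable lborel {a..b} w"
  using L2_inner_integrable[OF L2_indicator_Icc assms]
  by (simp add: set_integrable_def scaleR_conv_of_real)

lemma L2_inner_diff_right:
  assumes "L2 f" "L2 g" "L2 h"
  shows "L2_inner f (\<lambda>x. g x - h x) = L2_inner f g - L2_inner f h"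
  unfolding L2_inner_def
  using Bochner_Integration.integral_diff[OF L2_inner_integrable[OF assms(1,2)] L2_inner_integrable[OF assms(1,3)]]
  by (simp add: right_diff_distrib)

lemma L2_inner_diff_left:
  assumes "L2 f" "L2 g" "L2 h"
  shows "L2_inner (\<lambda>x. f x - g x) h = L2_inner f h - L2_inner g h"
  unfolding L2_inner_def
  using Bochner_Integration.integral_diff[OF L2_inner_integrable[OF assms(1,3)] L2_inner_integrable[OF assms(2,3)]]
  by (simp add: left_diff_distrib)

lemma L2_inner_cong_AE:
  assumes "L2 f" "L2 f'" "L2 g" "L2 g'" "AE x in lborel. f x = f' x" "AE x in lborel. g x = g' x"
  shows "L2_inner f g = L2_inner f' g'"
  unfolding L2_inner_def
proof (rule integral_cong_AE)
  show "AE x in lborel. cnj (f x) * g x = cnj (f' x) * g' x"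
    using assms(5,6) by eventually_elim simp
qed (use L2_inner_integrable[OF assms(1,3)] L2_inner_integrable[OF assms(2,4)] in auto)

lemma L2_inner_Cauchy_Schwarz:
  assumes "L2 f" "L2 g"
  shows "cmod (L2_inner f g) \<le> sqrt (LINT x|lborel. (cmod (f x))\<^sup>2) * sqrt (LINT x|lborel. (cmod (g x))\<^sup>2)"
proof -
  have [measurable]: "f \<in> borel_measurable lborel" "g \<in> borel_measurable lborel"
    using assms by (auto simp: L2_def)
  have fg: "integrable lborel (\<lambda>x. cmod (f x) * cmod (g x))"
    using integrable_norm[OF L2_inner_integrable[OF assms]] by (simp add: norm_mult)
  have nn: "(\<integral>\<^sup>+x. ennreal (h x) \<partial>lborel) = ennreal (LINT x|lborel. h x)"
    if "integrable lborel h" "\<And>x. 0 \<le> h x" for h :: "real \<Rightarrow> real"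
    using that by (intro nn_integral_eq_integral) auto
  define I where "I = (LINT x|lborel. cmod (f x) * cmod (g x))"
  have "ennreal (I\<^sup>2) = (\<integral>\<^sup>+x. ennreal (cmod (f x)) * ennreal (cmod (g x)) \<partial>lborel)\<^sup>2"
    using nn[OF fg] by (simp add: I_def ennreal_mult ennreal_power)
  also have "\<dots> \<le> (\<integral>\<^sup>+x. ennreal (cmod (f x)) ^ 2 \<partial>lborel) * (\<integral>\<^sup>+x. ennreal (cmod (g x)) ^ 2 \<partial>lborel)"
    by (rule Cauchy_Schwarz_nn_integral) measurable
  also have "\<dots> = ennreal ((LINT x|lborel. (cmod (f x))\<^sup>2) * (LINT x|lborel. (cmod (g x))\<^sup>2))"
    using nn[OF L2_integrable_square[OF assms(1)]] nn[OF L2_integrable_square[OF assms(2)]]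
    by (simp add: ennreal_power ennreal_mult)
  finally have "I\<^sup>2 \<le> (LINT x|lborel. (cmod (f x))\<^sup>2) * (LINT x|lborel. (cmod (g x))\<^sup>2)"
    by (subst (asm) ennreal_le_iff) auto
  then have "I \<le> sqrt ((LINT x|lborel. (cmod (f x))\<^sup>2) * (LINT x|lborel. (cmod (g x))\<^sup>2))"
    by (rule real_le_rsqrt)
  then have "I \<le> sqrt (LINT x|lborel. (cmod (f x))\<^sup>2) * sqrt (LINT x|lborel. (cmod (g x))\<^sup>2)"
    by (simp add: real_sqrt_mult)
  moreover have "cmod (L2_inner f g) \<le> I"
    unfolding L2_inner_def I_def using integral_norm_bound[of lborel "\<lambda>x. cnj (f x) * g x"]
    by (simp add: norm_mult)
  ultimately show ?thesis by linarith
qed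

lemma L2_inner_tendsto:
  assumes "L2 \<psi>" "\<And>N. L2 (S N)" "L2 l" "L2_tendsto S l"
  shows "(\<lambda>N. L2_inner \<psi> (S N)) \<longlonglongrightarrow> L2_inner \<psi> l"
proof -
  define c where "c = sqrt (LINT x|lborel. (cmod (\<psi> x))\<^sup>2)"
  define e where "e N = sqrt (LINT x|lborel. (cmod (S N x - l x))\<^sup>2)" for N
  have "e \<longlonglongrightarrow> 0"
    using assms(4) unfolding L2_tendsto_def e_def .
  then have lim: "(\<lambda>N. c * e N) \<longlonglongrightarrow> 0"
    by (rule tendsto_mult_right_zero)
  have bound: "norm (L2_inner \<psi> (S N) - L2_inner \<psi> l) \<le> c * e N" for N
  proof -
    have "L2_inner \<psi> (S N) - L2_inner \<psi> l = L2_inner \<psi> (\<lambda>x. S N x - l x)"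
      using L2_inner_diff_right[OF assms(1) assms(2) assms(3)] by simp
    then show ?thesis
      using L2_inner_Cauchy_Schwarz[OF assms(1) L2_diff[OF assms(2,3)]] by (simp only: c_def e_def)
  qed
  have "(\<lambda>N. L2_inner \<psi> (S N) - L2_inner \<psi> l) \<longlonglongrightarrow> 0"
    by (rule Lim_null_comparison[OF _ lim]) (intro always_eventually allI bound)
  then show ?thesis
    by (simp add: LIM_zero_iff)
qed

section \<open>Functions determined by their interval integrals\<close>

lemma emeasure_density_eq_integral:
  fixes g :: "'a \<Rightarrow> real"
  assumes g: "integrable M g" "\<And>x. 0 \<le> g x" and A [measurable]: "A \<in> sets M"
  shows "emeasure (density M (\<lambda>x. ennreal (g x))) A = ennreal (\<integral>y. indicator A y * g y \<partial>M)"
proof -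
  have [measurable]: "g \<in> borel_measurable M" using g(1) by auto
  have "emeasure (density M (\<lambda>x. ennreal (g x))) A = (\<integral>\<^sup>+x. ennreal (indicator A x * g x) \<partial>M)"
    by (subst emeasure_density) (auto intro!: nn_integral_cong simp: indicator_def)
  also have "\<dots> = ennreal (\<integral>y. indicator A y * g y \<partial>M)"
    using integrable_real_mult_indicator[OF A g(1)] g(2)
    by (intro nn_integral_eq_integral) (auto simp: mult.commute)
  finally show ?thesis .
qed

lemma AE_zero_if_halfline_integrals_zero_real:
  fixes h :: "real \<Rightarrow> real"
  assumes h: "integrable lborel h" and zero: "\<And>x. (\<integral>y. indicator {x<..} y * h y \<partial>lborel) = 0"
  shows "AE x in lborel. h x = 0"
proof -
  have [measurable]: "h \<in> borel_measurable lborel" using h by auto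
  define M where "M = density lborel (\<lambda>x. ennreal (max 0 (h x)))"
  define N where "N = density lborel (\<lambda>x. ennreal (max 0 (- h x)))"
  have ip: "integrable lborel (\<lambda>x. max 0 (h x))" and ineg: "integrable lborel (\<lambda>x. max 0 (- h x))"
    using h by (auto intro!: integrable_max)
  note eM = emeasure_density_eq_integral[OF ip, folded M_def, simplified]
  note eN = emeasure_density_eq_integral[OF ineg, folded N_def, simplified]
  have "M = N"
  proof (rule measure_eqI_lessThan)
    show "sets M = sets borel" "sets N = sets borel" by (simp_all add: M_def N_def)
    show "emeasure M {x<..} < \<infinity>" for x by (simp add: eM)
    show "emeasure M {x<..} = emeasure N {x<..}" for x
    proof -
      have "(\<integral>y. indicator {x<..} y * max 0 (h y) \<partial>lborel) - (\<integral>y. indicator {x<..} y * max 0 (- h y) \<partial>lborel)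
          = (\<integral>y. indicator {x<..} y * max 0 (h y) - indicator {x<..} y * max 0 (- h y) \<partial>lborel)"
        using integrable_real_mult_indicator[OF _ ip, of "{x<..}"] integrable_real_mult_indicator[OF _ ineg, of "{x<..}"]
        by (intro Bochner_Integration.integral_diff[symmetric]) (auto simp: mult.commute)
      also have "\<dots> = (\<integral>y. indicator {x<..} y * h y \<partial>lborel)"
        by (intro Bochner_Integration.integral_cong) (auto simp: indicator_def max_def)
      finally show ?thesis using zero[of x] by (simp add: eM eN)
    qed
  qed
  then have "AE x in lborel. ennreal (max 0 (h x)) = ennreal (max 0 (- h x))"
    unfolding M_def N_def
    by (intro sigma_finite_measure.density_unique[OF lborel.sigma_finite_measure_axioms]) auto
  then show ?thesis
    by eventually_elim (auto simp: max_def split: if_splits)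
qed

lemma AE_zero_if_halfline_integrals_zero:
  fixes h :: "real \<Rightarrow> complex"
  assumes h: "integrable lborel h" and zero: "\<And>x. (\<integral>y. indicator {x<..} y *\<^sub>R h y \<partial>lborel) = 0"
  shows "AE x in lborel. h x = 0"
proof -
  have ih: "integrable lborel (\<lambda>y. indicator {x<..} y *\<^sub>R h y)" for x
    using h by (intro integrable_mult_indicator) auto
  have "AE x in lborel. Re (h x) = 0"
  proof (rule AE_zero_if_halfline_integrals_zero_real)
    show "(\<integral>y. indicator {x<..} y * Re (h y) \<partial>lborel) = 0" for x
      using integral_Re[OF ih, of x] zero[of x] by simp
  qed (use h in auto)
  moreover have "AE x in lborel. Im (h x) = 0"
  proof (rule AE_zero_if_halfline_integrals_zero_real)
    show "(\<integral>y. indicator {x<..} y * Im (h y) \<partial>lborel) = 0" for x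
      using integral_Im[OF ih, of x] zero[of x] by simp
  qed (use h in auto)
  ultimately show ?thesis by eventually_elim (simp add: complex_eq_iff)
qed

lemma AE_zero_on_interval_if_integrals_zero:
  fixes d :: "real \<Rightarrow> complex"
  assumes int: "set_integrable lborel {c<..<R} d"
    and zero: "\<And>a b. c \<le> a \<Longrightarrow> a < b \<Longrightarrow> b \<le> R \<Longrightarrow> (LINT x:{a<..<b}|lborel. d x) = 0"
  shows "AE x in lborel. c < x \<longrightarrow> x < R \<longrightarrow> d x = 0"
proof -
  define h where "h = (\<lambda>x. indicator {c<..<R} x *\<^sub>R d x)"
  have "AE x in lborel. h x = 0"
  proof (rule AE_zero_if_halfline_integrals_zero)
    show "integrable lborel h" using int by (simp add: h_def set_integrable_def)
    fix x
    have eq: "(\<lambda>y. indicator {x<..} y *\<^sub>R h y) = (\<lambda>y. indicator {max x c<..<R} y *\<^sub>R d y)"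
      by (auto simp: h_def indicator_def fun_eq_iff)
    show "(\<integral>y. indicator {x<..} y *\<^sub>R h y \<partial>lborel) = 0"
    proof (cases "max x c < R")
      case True
      then show ?thesis using zero[of "max x c" R] by (simp add: eq set_lebesgue_integral_def)
    next
      case False
      then have "{max x c<..<R} = {}" by auto
      then show ?thesis by (simp add: eq)
    qed
  qed
  then show ?thesis by eventually_elim (auto simp: h_def indicator_def)
qed

lemma ex_annulus_Suc:
  fixes x :: real
  assumes "x \<noteq> 0"
  shows "\<exists>n. 1 / real (Suc n) < \<bar>x\<bar> \<and> \<bar>x\<bar> < real (Suc n)"
proof -
  obtain n :: nat where n: "max \<bar>x\<bar> (1 / \<bar>x\<bar>) < real n"
    using reals_Archimedean2 by blast
  then have "1 / \<bar>x\<bar> < real (Suc n)" by auto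
  then have "1 / real (Suc n) < \<bar>x\<bar>"
    using assms by (metis divide_less_eq mult.commute of_nat_0_less_iff zero_less_Suc zero_less_abs_iff)
  with n show ?thesis by auto
qed

text \<open>Intervals avoiding 0 suffice; the test functions used below vanish near 0,
  where 1/x is unbounded.\<close>
lemma AE_zero_if_interval_integrals_zero:
  fixes d :: "real \<Rightarrow> complex"
  assumes int: "\<And>a b. set_integrable lborel {a..b} d"
    and zero: "\<And>a b. a < b \<Longrightarrow> 0 < a \<or> b < 0 \<Longrightarrow> (LINT x:{a<..<b}|lborel. d x) = 0"
  shows "AE x in lborel. d x = 0"
proof -
  have si: "set_integrable lborel {c<..<R} d" for c R
    by (rule set_integrable_subset[OF int[of c R]]) auto
  have pos: "AE x in lborel. 1 / real (Suc n) < x \<longrightarrow> x < real (Suc n) \<longrightarrow> d x = 0" for n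
  proof (rule AE_zero_on_interval_if_integrals_zero[OF si])
    fix a b :: real assume ab: "1 / real (Suc n) \<le> a" "a < b"
    have "0 < 1 / real (Suc n)" by simp
    then have "0 < a" using ab(1) by linarith
    then show "(LINT x:{a<..<b}|lborel. d x) = 0" using ab by (intro zero) auto
  qed
  have neg: "AE x in lborel. - real (Suc n) < x \<longrightarrow> x < - (1 / real (Suc n)) \<longrightarrow> d x = 0" for n
  proof (rule AE_zero_on_interval_if_integrals_zero[OF si])
    fix a b :: real assume ab: "a < b" "b \<le> - (1 / real (Suc n))"
    have "0 < 1 / real (Suc n)" by simp
    then have "b < 0" using ab(2) by linarith
    then show "(LINT x:{a<..<b}|lborel. d x) = 0" using ab by (intro zero) auto
  qed
  have "AE x in lborel. (\<forall>n. 1 / real (Suc n) < x \<longrightarrow> x < real (Suc n) \<longrightarrow> d x = 0) \<and>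
      (\<forall>n. - real (Suc n) < x \<longrightarrow> x < - (1 / real (Suc n)) \<longrightarrow> d x = 0) \<and> x \<noteq> 0"
    using pos neg AE_lborel_singleton[of 0] by (simp add: AE_all_countable)
  then show ?thesis
  proof eventually_elim
    case (elim x)
    then obtain n where n: "1 / real (Suc n) < \<bar>x\<bar>" "\<bar>x\<bar> < real (Suc n)"
      using ex_annulus_Suc by blast
    show ?case
    proof (cases "0 < x")
      case True
      then show ?thesis using elim n by simp
    next
      case False
      then have "- real (Suc n) < x" "x < - (1 / real (Suc n))" using n by linarith+
      then show ?thesis using elim by blast
    qed
  qed
qed

lemma interval_integrable_if_locally:
  assumes "\<And>a b. set_integrable lborel {a..b} w"
  shows "interval_lebesgue_integrable lborel (ereal a) (ereal b) w"
proof -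
  have "set_integrable lborel {min a b<..<max a b} w"
    by (rule set_integrable_subset[OF assms[of "min a b" "max a b"]]) auto
  then show ?thesis
    by (auto simp: interval_lebesgue_integrable_def min_def max_def split: if_splits)
qed

lemma interval_integral_sum_if_locally:
  assumes "\<And>a b. set_integrable lborel {a..b} w"
  shows "(LBINT y=ereal a..ereal b. w y) + (LBINT y=ereal b..ereal c. w y) = (LBINT y=ereal a..ereal c. w y)"
proof (rule interval_integral_sum)
  have "min (ereal a) (min (ereal b) (ereal c)) = ereal (min a (min b c))"
    and "max (ereal a) (max (ereal b) (ereal c)) = ereal (max a (max b c))" by auto
  then show "interval_lebesgue_integrable lborel
      (min (ereal a) (min (ereal b) (ereal c))) (max (ereal a) (max (ereal b) (ereal c))) w"
    by (simp only: interval_integrable_if_locally[OF assms])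
qed

lemma AE_zero_if_indefinite_integral_zero:
  fixes d :: "real \<Rightarrow> complex"
  assumes int: "\<And>a b. set_integrable lborel {a..b} d" and zero: "\<And>x. (LBINT y=ereal 0..ereal x. d y) = 0"
  shows "AE x in lborel. d x = 0"
proof (rule AE_zero_if_interval_integrals_zero[OF int])
  fix a b :: real assume "a < b"
  have "(LBINT y=ereal a..ereal b. d y) = 0"
    using interval_integral_sum_if_locally[OF int, of 0 a b] zero[of a] zero[of b] by simp
  then show "(LINT x:{a<..<b}|lborel. d x) = 0"
    using \<open>a < b\<close> by (simp add: interval_integral_Ioo)
qed

lemma continuous_on_indefinite_integral:
  fixes w :: "real \<Rightarrow> complex"
  assumes int: "\<And>a b. set_integrable lborel {a..b} w"
  shows "continuous_on UNIV (\<lambda>x::real. LBINT y=0..ereal x. w y)"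
proof (intro continuous_at_imp_continuous_on ballI)
  fix x :: real
  define R where "R = \<bar>x\<bar> + 1"
  have "w integrable_on {-R..R}"
    using set_borel_integral_eq_integral(1)[OF int] .
  then have cont: "continuous_on {-R..R} (\<lambda>z. integral {-R..z} w)"
    by (rule indefinite_integral_continuous_1)
  have eq: "(LBINT y=0..ereal z. w y) = integral {-R..z} w - (LBINT y=ereal (-R)..ereal 0. w y)"
    if "z \<in> {-R..R}" for z
  proof -
    have "(LBINT y=ereal (-R)..ereal z. w y) = integral {-R..z} w"
      using that by (intro interval_integral_eq_integral int) auto
    then show ?thesis
      using interval_integral_sum_if_locally[OF int, of "-R" 0 z] by (simp add: zero_ereal_def algebra_simps)
  qed
  have "continuous_on {-R..R} (\<lambda>z::real. LBINT y=0..ereal z. w y)"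
    by (rule continuous_on_eq[OF continuous_on_diff[OF cont continuous_on_const]]) (use eq in auto)
  moreover have "x \<in> interior {-R..R}" by (auto simp: R_def)
  ultimately show "isCont (\<lambda>z::real. LBINT y=0..ereal z. w y) x"
    using continuous_on_interior by blast
qed

lemma interval_integral_FTC_finite_exceptions:
  fixes F f :: "real \<Rightarrow> complex"
  assumes S: "finite S" and F: "continuous_on UNIV F"
    and F': "\<And>x. x \<notin> S \<Longrightarrow> (F has_vector_derivative f x) (at x)"
    and int: "\<And>a b. set_integrable lborel {a..b} f"
  shows "(LBINT y=ereal a..ereal b. f y) = F b - F a"
proof -
  have ordered: "(LBINT y=ereal a..ereal b. f y) = F b - F a" if "a \<le> b" for a b
  proof -
    have "(f has_integral F b - F a) {a..b}"
      by (rule fundamental_theorem_of_calculus_interior_strong[OF S that])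
         (auto intro: F' continuous_on_subset[OF F])
    moreover have "(LBINT y=ereal a..ereal b. f y) = integral {a..b} f"
      using that int by (intro interval_integral_eq_integral) auto
    ultimately show ?thesis by (simp add: integral_unique)
  qed
  show ?thesis
  proof (cases "a \<le> b")
    case False
    then show ?thesis
      using ordered[of b a] by (subst interval_integral_endpoints_reverse) simp
  qed (rule ordered)
qed

lemma continuous_AE_eq_imp_eq:
  fixes f g :: "real \<Rightarrow> complex"
  assumes "continuous_on UNIV f" "continuous_on UNIV g" "AE x in lborel. f x = g x"
  shows "f x = g x"
proof (rule ccontr)
  assume ne: "f x \<noteq> g x"
  define S where "S = {x. f x \<noteq> g x}"
  have "open S" unfolding S_def using assms(1,2)
    by (intro open_Collect_neq) (auto simp: continuous_on_eq_continuous_at)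
  have [measurable]: "f \<in> borel_measurable borel" "g \<in> borel_measurable borel"
    using assms by (auto intro: borel_measurable_continuous_onI)
  have S: "S \<in> sets lborel" unfolding S_def by measurable
  have "emeasure lborel S = 0"
    using assms(3) by (subst AE_iff_measurable[symmetric, OF S]) (auto simp: S_def)
  then have "S \<in> null_sets lborel"
    using S by (simp add: null_sets_def)
  then have "negligible S"
    by (simp add: negligible_iff_null_sets null_sets_completionI)
  then show False
    using open_not_negligible[OF \<open>open S\<close>] ne by (auto simp: S_def)
qed

lemma p_graph_AE_eq_derivative:
  assumes fg: "(f, g) \<in> p_graph" and fF: "AE x in lborel. f x = F x"
    and F: "continuous_on UNIV F" "\<And>x. (F has_vector_derivative F' x) (at x)"
    and F': "\<And>a b. set_integrable lborel {a..b} F'"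
  shows "AE x in lborel. g x = - \<i> * F' x"
proof -
  obtain u w where w: "L2 w" and fu: "AE x in lborel. f x = u x"
    and uw: "\<And>x. u x = u 0 + (LBINT y=0..x. w y)" and gw: "AE x in lborel. g x = - \<i> * w x"
    using fg unfolding p_graph_def by blast
  have "continuous_on UNIV (\<lambda>x::real. u 0 + (LBINT y=0..ereal x. w y))"
    by (intro continuous_on_add continuous_on_const continuous_on_indefinite_integral L2_set_integrable w)
  then have "continuous_on UNIV u"
    by (subst (asm) uw[symmetric])
  moreover have "AE x in lborel. u x = F x" using fu fF by eventually_elim simp
  ultimately have uF: "u x = F x" for x
    by (rule continuous_AE_eq_imp_eq[OF _ F(1)])
  define d where "d x = w x - F' x" for x
  have int: "set_integrable lborel {a..b} d" for a b
    unfolding d_def by (intro set_integral_diff(1) L2_set_integrable w F')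
  have "AE x in lborel. d x = 0"
  proof (rule AE_zero_if_indefinite_integral_zero[OF int])
    fix x
    have "(LBINT y=ereal 0..ereal x. d y) = (LBINT y=ereal 0..ereal x. w y) - (LBINT y=ereal 0..ereal x. F' y)"
      unfolding d_def
      by (intro interval_lebesgue_integral_diff(2) interval_integrable_if_locally L2_set_integrable w F')
    also have "\<dots> = 0"
      using uw[of x] uF[of x] uF[of 0]
        interval_integral_FTC_finite_exceptions[where S="{}", OF _ F F', of 0 x]
      by (simp add: zero_ereal_def)
    finally show "(LBINT y=ereal 0..ereal x. d y) = 0" .
  qed
  then show ?thesis
    using gw by eventually_elim (simp add: d_def)
qed

section \<open>Gaussian polynomials and the operator t\<close>

lemma integrable_gauss_moment:
  assumes "0 < c"
  shows "integrable lborel (\<lambda>x::real. \<bar>x\<bar> ^ k * exp (- (x\<^sup>2) / c))"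
proof -
  define \<sigma> where "\<sigma> = sqrt (c / 2)"
  have \<sigma>: "0 < \<sigma>" "c = 2 * \<sigma>\<^sup>2" using assms by (simp_all add: \<sigma>_def)
  have "integrable lborel (\<lambda>x. sqrt (2 * pi * \<sigma>\<^sup>2) * (normal_density 0 \<sigma> x * \<bar>x - 0\<bar> ^ k))"
    by (intro integrable_mult_right integrable_normal_moment_abs \<sigma>)
  also have "(\<lambda>x. sqrt (2 * pi * \<sigma>\<^sup>2) * (normal_density 0 \<sigma> x * \<bar>x - 0\<bar> ^ k))
      = (\<lambda>x. \<bar>x\<bar> ^ k * exp (- (x\<^sup>2) / c))"
    using \<sigma> unfolding normal_density_def by (intro ext) simp
  finally show ?thesis .
qed

lemma has_bochner_integral_gauss_odd_moment:
  assumes "0 < c"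
  shows "has_bochner_integral lborel (\<lambda>x::real. \<bar>x\<bar> ^ (2 * k + 1) * exp (- (x\<^sup>2) / c)) (fact k * c ^ (k + 1))"
proof -
  define \<sigma> where "\<sigma> = sqrt (c / 2)"
  have \<sigma>: "0 < \<sigma>" "c = 2 * \<sigma>\<^sup>2" using assms by (simp_all add: \<sigma>_def)
  have "has_bochner_integral lborel (\<lambda>x. sqrt (2 * pi * \<sigma>\<^sup>2) * (normal_density 0 \<sigma> x * \<bar>x - 0\<bar> ^ (2 * k + 1)))
      (sqrt (2 * pi * \<sigma>\<^sup>2) * (2 ^ k * \<sigma> ^ (2 * k + 1) * fact k * sqrt (2 / pi)))"
    by (intro has_bochner_integral_mult_right normal_moment_abs_odd \<sigma>)
  moreover have "(\<lambda>x. sqrt (2 * pi * \<sigma>\<^sup>2) * (normal_density 0 \<sigma> x * \<bar>x - 0\<bar> ^ (2 * k + 1)))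
      = (\<lambda>x. \<bar>x\<bar> ^ (2 * k + 1) * exp (- (x\<^sup>2) / c))"
    using \<sigma> unfolding normal_density_def by (intro ext) simp
  moreover have "sqrt (2 * pi * \<sigma>\<^sup>2) * (2 ^ k * \<sigma> ^ (2 * k + 1) * fact k * sqrt (2 / pi)) = fact k * c ^ (k + 1)"
  proof -
    have "sqrt (2 * pi * \<sigma>\<^sup>2) * sqrt (2 / pi) = sqrt ((2 * \<sigma>)\<^sup>2)"
      unfolding real_sqrt_mult[symmetric] by (simp add: power2_eq_square field_simps)
    also have "\<dots> = 2 * \<sigma>" by (subst real_sqrt_abs) (use \<sigma> in simp)
    finally have e: "sqrt (2 * pi * \<sigma>\<^sup>2) * sqrt (2 / pi) = 2 * \<sigma>" .
    have "sqrt (2 * pi * \<sigma>\<^sup>2) * (2 ^ k * \<sigma> ^ (2 * k + 1) * fact k * sqrt (2 / pi))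
        = (sqrt (2 * pi * \<sigma>\<^sup>2) * sqrt (2 / pi)) * (2 ^ k * \<sigma> ^ (2 * k + 1) * fact k)"
      by (simp only: ac_simps)
    also have "\<dots> = fact k * (2 ^ (k + 1) * \<sigma> ^ (2 * k + 2))"
      unfolding e by (simp add: algebra_simps power_add power2_eq_square)
    also have "\<sigma> ^ (2 * k + 2) = (\<sigma>\<^sup>2) ^ (k + 1)"
      unfolding power_mult[symmetric] by (simp add: algebra_simps)
    also have "fact k * (2 ^ (k + 1) * (\<sigma>\<^sup>2) ^ (k + 1)) = fact k * c ^ (k + 1)"
      by (simp add: \<sigma>(2) power_mult_distrib)
    finally show ?thesis .
  qed
  ultimately show ?thesis by (simp only:)
qed

definition gauss_poly :: "nat \<Rightarrow> real \<Rightarrow> complex poly \<Rightarrow> real \<Rightarrow> complex" where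
  "gauss_poly s a P x =
     complex_of_real x ^ s * poly P (complex_of_real (x\<^sup>2)) * complex_of_real (exp (- (x\<^sup>2) / (2 * a)))"

definition deriv_poly :: "real \<Rightarrow> complex poly \<Rightarrow> complex poly" where
  "deriv_poly a P = smult 2 (pderiv P) - smult (complex_of_real (1 / a)) P"

definition t_poly :: "real \<Rightarrow> complex poly \<Rightarrow> complex poly" where
  "t_poly a P = smult (- \<i>) (deriv_poly a P)"

lemma gauss_poly_0 [simp]: "gauss_poly s a 0 = (\<lambda>x. 0)"
  by (simp add: gauss_poly_def fun_eq_iff)

lemma gauss_poly_sum:
  "gauss_poly s a (\<Sum>n\<in>I. smult (c n) (Q n)) x = (\<Sum>n\<in>I. c n * gauss_poly s a (Q n) x)"
  by (simp add: gauss_poly_def poly_sum sum_distrib_left sum_distrib_right algebra_simps)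

lemma gauss_poly_eq_sum:
  assumes "degree P \<le> m"
  shows "gauss_poly s a P x = (\<Sum>j\<le>m. coeff P j * complex_of_real (x ^ (2 * j + s) * exp (- (x\<^sup>2) / (2 * a))))"
proof -
  have "poly P z = (\<Sum>j\<le>m. coeff P j * z ^ j)" for z
    unfolding poly_altdef using assms
    by (intro sum.mono_neutral_left) (auto simp: coeff_eq_0)
  then have "poly P (complex_of_real (x\<^sup>2)) = (\<Sum>j\<le>m. coeff P j * complex_of_real (x ^ (2 * j)))"
    by (simp add: power_mult)
  then show ?thesis
    unfolding gauss_poly_def by (simp add: sum_distrib_left sum_distrib_right power_add mult_ac)
qed

lemma has_vector_derivative_gauss_poly:
  assumes "0 < a"
  shows "(gauss_poly 0 a P has_vector_derivative gauss_poly 1 a (deriv_poly a P) x) (at x)"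
proof -
  define c where "c = complex_of_real a"
  have c0: "c \<noteq> 0" using assms by (simp add: c_def)
  define H where "H z = poly P (z\<^sup>2) * exp (- (z\<^sup>2) / (2 * c))" for z
  have "(H has_field_derivative (z * poly (deriv_poly a P) (z\<^sup>2) * exp (- (z\<^sup>2) / (2 * c)))) (at z)" for z
  proof -
    have "((\<lambda>z. poly P (z\<^sup>2)) has_field_derivative poly (pderiv P) (z\<^sup>2) * (2 * z)) (at z)"
      by (rule DERIV_chain2[OF poly_DERIV]) (auto intro!: derivative_eq_intros)
    moreover have "((\<lambda>z. exp (- (z\<^sup>2) / (2 * c))) has_field_derivative exp (- (z\<^sup>2) / (2 * c)) * (- z / c)) (at z)"
      by (rule DERIV_chain2[OF DERIV_exp]) (auto intro!: derivative_eq_intros simp: c0 field_simps)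
    ultimately have "(H has_field_derivative poly (pderiv P) (z\<^sup>2) * (2 * z) * exp (- (z\<^sup>2) / (2 * c))
        + exp (- (z\<^sup>2) / (2 * c)) * (- z / c) * poly P (z\<^sup>2)) (at z)"
      unfolding H_def by (rule DERIV_mult)
    then show ?thesis
      using c0 by (simp add: deriv_poly_def c_def field_simps)
  qed
  then have "((\<lambda>x. H (of_real x)) has_vector_derivative
      (of_real x * poly (deriv_poly a P) ((of_real x)\<^sup>2) * exp (- ((of_real x)\<^sup>2) / (2 * c)))) (at x)"
    by (rule has_vector_derivative_real_field)
  moreover have "gauss_poly 0 a P = (\<lambda>x. H (of_real x))"
    by (auto simp: gauss_poly_def H_def c_def fun_eq_iff exp_of_real[symmetric])
  moreover have "of_real x * poly (deriv_poly a P) ((of_real x)\<^sup>2) * exp (- ((of_real x)\<^sup>2) / (2 * c))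
      = gauss_poly 1 a (deriv_poly a P) x"
    by (simp add: gauss_poly_def c_def exp_of_real[symmetric])
  ultimately show ?thesis by simp
qed

lemma continuous_on_gauss_poly: "0 < a \<Longrightarrow> continuous_on UNIV (gauss_poly s a P)"
proof -
  assume "0 < a"
  then have "continuous_on UNIV (gauss_poly 0 a P)"
    by (intro continuous_at_imp_continuous_on ballI has_vector_derivative_continuous[OF has_vector_derivative_gauss_poly])
  moreover have "gauss_poly s a P = (\<lambda>x. complex_of_real x ^ s * gauss_poly 0 a P x)"
    by (simp add: gauss_poly_def fun_eq_iff)
  ultimately show ?thesis
    by (auto intro!: continuous_intros)
qed

lemma L2_gauss_monomial:
  assumes "0 < a"
  shows "L2 (\<lambda>x. complex_of_real (x ^ k * exp (- (x\<^sup>2) / (2 * a))))"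
proof -
  have sq: "(cmod (complex_of_real (x ^ k * exp (- (x\<^sup>2) / (2 * a)))))\<^sup>2
      = \<bar>x\<bar> ^ (2 * k) * exp (- (x\<^sup>2) / a)" for x
  proof -
    have "(exp (- (x\<^sup>2) / (2 * a)))\<^sup>2 = exp (- (x\<^sup>2) / a)"
      using assms by (simp add: power2_eq_square exp_add[symmetric] field_simps)
    moreover have "(x ^ k)\<^sup>2 = \<bar>x\<bar> ^ (2 * k)"
      by (simp add: power_even_abs power_mult[symmetric] mult.commute)
    ultimately show ?thesis
      by (simp only: norm_of_real power2_abs power_mult_distrib)
  qed
  have "(\<lambda>x. complex_of_real (x ^ k * exp (- (x\<^sup>2) / (2 * a)))) \<in> borel_measurable lborel"
    by measurable
  then show ?thesis
    unfolding L2_def sq using integrable_gauss_moment[OF assms, of "2 * k"] by blast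
qed

lemma L2_gauss_poly:
  assumes "0 < a"
  shows "L2 (gauss_poly s a P)"
proof -
  have "L2 (\<lambda>x. \<Sum>j\<le>degree P. coeff P j * complex_of_real (x ^ (2 * j + s) * exp (- (x\<^sup>2) / (2 * a))))"
    by (intro L2_sum L2_mult_left L2_gauss_monomial assms)
  then show ?thesis
    by (simp only: gauss_poly_eq_sum[OF order.refl, abs_def])
qed

lemma t_graph_gauss_poly_even:
  assumes a: "0 < a" and fg: "(f, g) \<in> t_graph" and f: "AE x in lborel. f x = gauss_poly 0 a P x"
  shows "AE x in lborel. g x = gauss_poly 0 a (t_poly a P) x"
proof -
  obtain m where fm: "(f, m) \<in> p_graph" and mg: "(m, g) \<in> qinv_graph"
    using fg by (auto simp: t_graph_def)
  have "AE x in lborel. m x = - \<i> * gauss_poly 1 a (deriv_poly a P) x"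
    using fm f continuous_on_gauss_poly[OF a] has_vector_derivative_gauss_poly[OF a]
      L2_set_integrable[OF L2_gauss_poly[OF a]]
    by (rule p_graph_AE_eq_derivative)
  moreover have "AE x in lborel. g x = m x / complex_of_real x"
    using mg by (simp add: qinv_graph_def)
  ultimately show ?thesis
    using AE_lborel_singleton[of 0] by eventually_elim (simp add: gauss_poly_def t_poly_def)
qed

section \<open>Tents and the adjoint of t\<close>

definition tent :: "real \<Rightarrow> real \<Rightarrow> real \<Rightarrow> real \<Rightarrow> real" where
  "tent A B \<delta> x = max 0 (min 1 (min ((x - A) / \<delta>) ((B - x) / \<delta>)))"

definition tent_deriv :: "real \<Rightarrow> real \<Rightarrow> real \<Rightarrow> real \<Rightarrow> real" where
  "tent_deriv A B \<delta> x =
     (if A < x \<and> x < A + \<delta> then 1 / \<delta> else if B - \<delta> < x \<and> x < B then - 1 / \<delta> else 0)"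

definition t_tent :: "real \<Rightarrow> real \<Rightarrow> real \<Rightarrow> real \<Rightarrow> complex" where
  "t_tent A B \<delta> x = - \<i> * complex_of_real (tent_deriv A B \<delta> x / x)"

lemma tent_bounds: "0 \<le> tent A B \<delta> x" "tent A B \<delta> x \<le> 1"
  by (auto simp: tent_def)

lemma continuous_on_tent: "continuous_on UNIV (tent A B \<delta>)"
  unfolding tent_def divide_inverse by (intro continuous_intros)

lemma borel_measurable_tent [measurable]: "tent A B \<delta> \<in> borel_measurable borel"
  by (rule borel_measurable_continuous_onI[OF continuous_on_tent])

lemma borel_measurable_tent_deriv [measurable]: "tent_deriv A B \<delta> \<in> borel_measurable borel"
  unfolding tent_deriv_def by measurable

locale tent_shape =
  fixes A B \<delta> :: real
  assumes \<delta>_pos: "0 < \<delta>" and \<delta>_le: "2 * \<delta> \<le> B - A"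
begin

lemma tent_eq_0:
  assumes "x \<le> A \<or> B \<le> x"
  shows "tent A B \<delta> x = 0"
proof -
  have "(x - A) / \<delta> \<le> 0 \<or> (B - x) / \<delta> \<le> 0"
    using assms \<delta>_pos by (auto simp: divide_nonpos_pos)
  then show ?thesis by (auto simp: tent_def)
qed

lemma tent_deriv_eq_0: "x \<le> A \<or> B \<le> x \<Longrightarrow> tent_deriv A B \<delta> x = 0"
  using \<delta>_pos \<delta>_le by (auto simp: tent_deriv_def)

lemma tent_le_indicator: "tent A B \<delta> x \<le> indicator {A..B} x"
  using tent_bounds[of A B \<delta> x] tent_eq_0[of x] by (auto simp: indicator_def)

lemma abs_tent_deriv_le: "\<bar>tent_deriv A B \<delta> x\<bar> \<le> indicator {A..B} x / \<delta>"
  using \<delta>_pos \<delta>_le by (auto simp: tent_deriv_def indicator_def)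

lemma tent_eq_affine:
  "A \<le> x \<Longrightarrow> x \<le> A + \<delta> \<Longrightarrow> tent A B \<delta> x = (x - A) / \<delta>"
  "A + \<delta> \<le> x \<Longrightarrow> x \<le> B - \<delta> \<Longrightarrow> tent A B \<delta> x = 1"
  "B - \<delta> \<le> x \<Longrightarrow> x \<le> B \<Longrightarrow> tent A B \<delta> x = (B - x) / \<delta>"
proof -
  assume "A \<le> x" "x \<le> A + \<delta>"
  moreover have "(x - A) / \<delta> \<le> (B - x) / \<delta>"
    using calculation \<delta>_le \<delta>_pos by (intro divide_right_mono) auto
  ultimately show "tent A B \<delta> x = (x - A) / \<delta>"
    using \<delta>_pos by (simp add: tent_def)
next
  assume "A + \<delta> \<le> x" "x \<le> B - \<delta>"
  then have "1 \<le> (x - A) / \<delta>" "1 \<le> (B - x) / \<delta>"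
    using \<delta>_pos by simp_all
  then show "tent A B \<delta> x = 1" by (simp add: tent_def)
next
  assume "B - \<delta> \<le> x" "x \<le> B"
  moreover have "(B - x) / \<delta> \<le> (x - A) / \<delta>"
    using calculation \<delta>_le \<delta>_pos by (intro divide_right_mono) auto
  ultimately show "tent A B \<delta> x = (B - x) / \<delta>"
    using \<delta>_pos by (simp add: tent_def)
qed

lemma has_vector_derivative_tent:
  assumes x: "x \<notin> {A, A + \<delta>, B - \<delta>, B}"
  shows "(tent A B \<delta> has_vector_derivative tent_deriv A B \<delta> x) (at x)"
proof -
  have up: "((\<lambda>y. (y - A) / \<delta>) has_vector_derivative 1 / \<delta>) (at x)"
    and down: "((\<lambda>y. (B - y) / \<delta>) has_vector_derivative - 1 / \<delta>) (at x)"
    unfolding has_real_derivative_iff_has_vector_derivative[symmetric]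
    using \<delta>_pos by (auto intro!: derivative_eq_intros)
  have const: "((\<lambda>y. c) has_vector_derivative 0) (at x)" for c :: real
    by (rule has_vector_derivative_const)
  consider "x < A \<or> B < x" | "A < x" "x < A + \<delta>" | "A + \<delta> < x" "x < B - \<delta>" | "B - \<delta> < x" "x < B"
    using x by fastforce
  then show ?thesis
  proof cases
    case 1
    have "(tent A B \<delta> has_vector_derivative 0) (at x)"
      by (rule has_vector_derivative_transform_within_open[OF const, where S="- {A..B}"])
         (use 1 in \<open>auto simp: tent_eq_0\<close>)
    moreover have "tent_deriv A B \<delta> x = 0" using 1 tent_deriv_eq_0[of x] by auto
    ultimately show ?thesis by simp
  next
    case 2
    have "(tent A B \<delta> has_vector_derivative 1 / \<delta>) (at x)"
      by (rule has_vector_derivative_transform_within_open[OF up, where S="{A<..<A + \<delta>}"])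
         (use 2 in \<open>auto simp: tent_eq_affine(1)\<close>)
    then show ?thesis using 2 by (simp add: tent_deriv_def)
  next
    case 3
    have "(tent A B \<delta> has_vector_derivative 0) (at x)"
      by (rule has_vector_derivative_transform_within_open[OF const, where S="{A + \<delta><..<B - \<delta>}"])
         (use 3 in \<open>auto simp: tent_eq_affine(2)\<close>)
    then show ?thesis using 3 by (simp add: tent_deriv_def)
  next
    case 4
    have "(tent A B \<delta> has_vector_derivative - 1 / \<delta>) (at x)"
      by (rule has_vector_derivative_transform_within_open[OF down, where S="{B - \<delta><..<B}"])
         (use 4 in \<open>auto simp: tent_eq_affine(3)\<close>)
    moreover have "tent_deriv A B \<delta> x = - 1 / \<delta>"
      using 4 \<delta>_le by (auto simp: tent_deriv_def)
    ultimately show ?thesis by simp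
  qed
qed

end

context tent_shape
begin

lemma L2_tent: "L2 (\<lambda>x. complex_of_real (tent A B \<delta> x))"
proof (rule L2_dominated[OF L2_indicator_Icc[of A B], where C=1])
  show "AE x in lborel. cmod (complex_of_real (tent A B \<delta> x)) \<le> 1 * cmod (complex_of_real (indicator {A..B} x))"
    using tent_le_indicator tent_bounds by (intro AE_I2) simp
qed measurable

lemma L2_tent_deriv: "L2 (\<lambda>x. complex_of_real (tent_deriv A B \<delta> x))"
proof (rule L2_dominated[OF L2_indicator_Icc[of A B], where C="1 / \<delta>"])
  show "AE x in lborel. cmod (complex_of_real (tent_deriv A B \<delta> x))
      \<le> 1 / \<delta> * cmod (complex_of_real (indicator {A..B} x))"
    using abs_tent_deriv_le by (intro AE_I2) simp
qed measurable

lemma L2_t_tent: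
  assumes "0 < A \<or> B < 0"
  shows "L2 (t_tent A B \<delta>)"
proof -
  define \<mu> where "\<mu> = min \<bar>A\<bar> \<bar>B\<bar>"
  have \<mu>: "0 < \<mu>" using assms \<delta>_pos \<delta>_le by (auto simp: \<mu>_def)
  have "cmod (t_tent A B \<delta> x) \<le> 1 / (\<delta> * \<mu>) * cmod (complex_of_real (indicator {A..B} x))" for x
  proof (cases "A < x \<and> x < B")
    case True
    then have "\<mu> \<le> \<bar>x\<bar>" using assms by (auto simp: \<mu>_def)
    then have "\<bar>tent_deriv A B \<delta> x\<bar> / \<bar>x\<bar> \<le> (1 / \<delta>) / \<mu>"
      using abs_tent_deriv_le[of x] True \<mu> \<delta>_pos by (intro frac_le) (auto simp: indicator_def)
    moreover have "cmod (t_tent A B \<delta> x) = \<bar>tent_deriv A B \<delta> x\<bar> / \<bar>x\<bar>"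
      by (simp only: t_tent_def norm_mult norm_minus_cancel norm_ii norm_of_real abs_divide)
    ultimately show ?thesis using True by (simp add: indicator_def)
  next
    case False
    then show ?thesis using tent_deriv_eq_0[of x] \<delta>_pos \<mu> by (auto simp: t_tent_def)
  qed
  moreover have "t_tent A B \<delta> \<in> borel_measurable lborel"
    unfolding t_tent_def by measurable
  ultimately show ?thesis
    by (intro L2_dominated[OF L2_indicator_Icc[of A B], where C="1 / (\<delta> * \<mu>)"] AE_I2) auto
qed

lemma interval_integral_tent_deriv:
  "(LBINT y=ereal c..ereal e. complex_of_real (tent_deriv A B \<delta> y))
     = complex_of_real (tent A B \<delta> e) - complex_of_real (tent A B \<delta> c)"
  by (rule interval_integral_FTC_finite_exceptions[where S="{A, A + \<delta>, B - \<delta>, B}"])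
     (auto intro: continuous_on_of_real continuous_on_tent L2_set_integrable[OF L2_tent_deriv]
        bounded_linear.has_vector_derivative[OF bounded_linear_of_real has_vector_derivative_tent])

lemma tent_t_graph:
  assumes "0 < A \<or> B < 0"
  shows "((\<lambda>x. complex_of_real (tent A B \<delta> x)), t_tent A B \<delta>) \<in> t_graph"
proof -
  define m where "m x = - \<i> * complex_of_real (tent_deriv A B \<delta> x)" for x
  have "L2 m" unfolding m_def by (intro L2_mult_left L2_tent_deriv)
  have ftc: "\<forall>x. complex_of_real (tent A B \<delta> x)
      = complex_of_real (tent A B \<delta> 0) + (LBINT y=0..ereal x. complex_of_real (tent_deriv A B \<delta> y))"
    using interval_integral_tent_deriv[of 0] by (simp add: zero_ereal_def)
  have "((\<lambda>x. complex_of_real (tent A B \<delta> x)), m) \<in> p_graph"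
    unfolding p_graph_def mem_Collect_eq prod.case
    by (intro conjI L2_tent \<open>L2 m\<close> exI[of _ "\<lambda>x. complex_of_real (tent A B \<delta> x)"]
        exI[of _ "\<lambda>x. complex_of_real (tent_deriv A B \<delta> x)"])
       (fact L2_tent_deriv | simp | fact ftc | simp add: m_def)+
  moreover have "(m, t_tent A B \<delta>) \<in> qinv_graph"
    unfolding qinv_graph_def using \<open>L2 m\<close> L2_t_tent[OF assms] by (auto simp: m_def t_tent_def)
  ultimately show ?thesis unfolding t_graph_def by blast
qed

lemma L2_inner_tent_deriv_by_parts:
  fixes F F' :: "real \<Rightarrow> complex"
  assumes L2: "L2 F" "L2 F'" and F: "continuous_on UNIV F" "\<And>x. (F has_vector_derivative F' x) (at x)"
  shows "L2_inner F (\<lambda>x. complex_of_real (tent_deriv A B \<delta> x))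
      = - L2_inner F' (\<lambda>x. complex_of_real (tent A B \<delta> x))"
proof -
  define \<Phi> where "\<Phi> x = cnj (F x) * complex_of_real (tent A B \<delta> x)" for x
  define \<Phi>' where "\<Phi>' x = cnj (F x) * complex_of_real (tent_deriv A B \<delta> x)
      + cnj (F' x) * complex_of_real (tent A B \<delta> x)" for x
  have i1: "integrable lborel (\<lambda>x. cnj (F x) * complex_of_real (tent_deriv A B \<delta> x))"
    by (rule L2_inner_integrable[OF L2(1) L2_tent_deriv])
  have i2: "integrable lborel (\<lambda>x. cnj (F' x) * complex_of_real (tent A B \<delta> x))"
    by (rule L2_inner_integrable[OF L2(2) L2_tent])
  have "(LBINT y=ereal A..ereal B. \<Phi>' y) = \<Phi> B - \<Phi> A"
  proof (rule interval_integral_FTC_finite_exceptions[where S="{A, A + \<delta>, B - \<delta>, B}"])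
    show "continuous_on UNIV \<Phi>"
      unfolding \<Phi>_def by (intro continuous_intros F continuous_on_tent)
    show "(\<Phi> has_vector_derivative \<Phi>' x) (at x)" if "x \<notin> {A, A + \<delta>, B - \<delta>, B}" for x
      unfolding \<Phi>_def \<Phi>'_def
      using has_vector_derivative_mult[OF
          bounded_linear.has_vector_derivative[OF bounded_linear_cnj F(2)]
          bounded_linear.has_vector_derivative[OF bounded_linear_of_real has_vector_derivative_tent[OF that]]]
      by (simp add: add.commute)
    show "set_integrable lborel {a..b} \<Phi>'" for a b
      using i1 i2 unfolding set_integrable_def \<Phi>'_def
      by (intro integrable_mult_indicator Bochner_Integration.integrable_add) auto
  qed simp
  also have "\<dots> = 0"
    using tent_eq_0[of A] tent_eq_0[of B] by (simp add: \<Phi>_def)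
  finally have "(LINT x:{A<..<B}|lborel. \<Phi>' x) = 0"
    using \<delta>_pos \<delta>_le by (simp add: interval_integral_Ioo)
  moreover have "(LINT x:{A<..<B}|lborel. \<Phi>' x) = (LINT x|lborel. \<Phi>' x)"
    unfolding set_lebesgue_integral_def
    using tent_eq_0 tent_deriv_eq_0 by (intro Bochner_Integration.integral_cong) (auto simp: \<Phi>'_def indicator_def)
  ultimately show ?thesis
    unfolding L2_inner_def \<Phi>'_def
    by (simp add: Bochner_Integration.integral_add[OF i1 i2] eq_neg_iff_add_eq_0)
qed

lemma L2_inner_gauss_poly_t_tent:
  assumes a: "0 < a" and avoid0: "0 < A \<or> B < 0"
  shows "L2_inner (gauss_poly 1 a P) (t_tent A B \<delta>)
      = L2_inner (gauss_poly 1 a (t_poly a P)) (\<lambda>x. complex_of_real (tent A B \<delta> x))"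
proof -
  have "tent_deriv A B \<delta> 0 = 0" using avoid0 tent_deriv_eq_0 by auto
  then have "cnj (gauss_poly 1 a P x) * t_tent A B \<delta> x
      = - \<i> * (cnj (gauss_poly 0 a P x) * complex_of_real (tent_deriv A B \<delta> x))" for x
    by (cases "x = 0") (auto simp: gauss_poly_def t_tent_def)
  then have "L2_inner (gauss_poly 1 a P) (t_tent A B \<delta>)
      = - \<i> * L2_inner (gauss_poly 0 a P) (\<lambda>x. complex_of_real (tent_deriv A B \<delta> x))"
    by (simp add: L2_inner_def)
  also have "\<dots> = \<i> * L2_inner (gauss_poly 1 a (deriv_poly a P)) (\<lambda>x. complex_of_real (tent A B \<delta> x))"
    using L2_inner_tent_deriv_by_parts[OF L2_gauss_poly[OF a] L2_gauss_poly[OF a]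
        continuous_on_gauss_poly[OF a] has_vector_derivative_gauss_poly[OF a]] by simp
  also have "\<dots> = L2_inner (gauss_poly 1 a (t_poly a P)) (\<lambda>x. complex_of_real (tent A B \<delta> x))"
    by (simp add: L2_inner_def gauss_poly_def t_poly_def mult_ac)
  finally show ?thesis .
qed

end

lemma tent_shape_seq: "A < B \<Longrightarrow> tent_shape A B ((B - A) / (2 * real (Suc n)))"
  by unfold_locales (auto simp: field_simps intro: mult_right_mono)

lemma tent_tendsto_indicator:
  assumes "A < B"
  shows "(\<lambda>n. tent A B ((B - A) / (2 * real (Suc n))) x) \<longlonglongrightarrow> indicator {A<..<B} x"
proof (cases "A < x \<and> x < B")
  case True
  have "(\<lambda>n. (B - A) / 2 * inverse (real (Suc n))) \<longlonglongrightarrow> 0"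
    by (intro tendsto_mult_right_zero LIMSEQ_inverse_real_of_nat)
  then have "eventually (\<lambda>n. (B - A) / (2 * real (Suc n)) < min (x - A) (B - x)) sequentially"
    using True by (intro order_tendstoD(2)) (auto simp: field_simps)
  then have "eventually (\<lambda>n. tent A B ((B - A) / (2 * real (Suc n))) x = 1) sequentially"
  proof eventually_elim
    case (elim n)
    interpret tent_shape A B "(B - A) / (2 * real (Suc n))"
      using assms by (rule tent_shape_seq)
    show ?case using elim by (intro tent_eq_affine(2)) auto
  qed
  then show ?thesis
    using True by (simp add: tendsto_eventually)
next
  case False
  have "tent A B ((B - A) / (2 * real (Suc n))) x = 0" for n
  proof -
    interpret tent_shape A B "(B - A) / (2 * real (Suc n))"
      using assms by (rule tent_shape_seq)
    show ?thesis using False by (intro tent_eq_0) auto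
  qed
  then show ?thesis
    using False by simp
qed

lemma L2_inner_tents_tendsto:
  assumes d: "L2 d" and AB: "A < B"
  shows "(\<lambda>n. L2_inner d (\<lambda>x. complex_of_real (tent A B ((B - A) / (2 * real (Suc n))) x)))
      \<longlonglongrightarrow> (LINT x:{A<..<B}|lborel. cnj (d x))"
  unfolding L2_inner_def set_lebesgue_integral_def
proof (rule integral_dominated_convergence[where w="\<lambda>x. indicator {A..B} x * cmod (d x)"])
  have [measurable]: "d \<in> borel_measurable lborel" using d by (rule L2_borel_measurable)
  show "(\<lambda>x. indicator {A<..<B} x *\<^sub>R cnj (d x)) \<in> borel_measurable lborel"
    and "(\<lambda>x. cnj (d x) * complex_of_real (tent A B ((B - A) / (2 * real (Suc n))) x))
      \<in> borel_measurable lborel" for n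
    by measurable
  have "(\<lambda>x. norm (indicator {A..B} x *\<^sub>R d x)) = (\<lambda>x. indicator {A..B} x * cmod (d x))"
    by (auto simp: indicator_def fun_eq_iff)
  then show "integrable lborel (\<lambda>x. indicator {A..B} x * cmod (d x))"
    using integrable_norm[OF L2_set_integrable[OF d, of A B, unfolded set_integrable_def]] by simp
  show "AE x in lborel. (\<lambda>n. cnj (d x) * complex_of_real (tent A B ((B - A) / (2 * real (Suc n))) x))
      \<longlonglongrightarrow> indicator {A<..<B} x *\<^sub>R cnj (d x)"
  proof (intro AE_I2)
    fix x
    have "(\<lambda>n. complex_of_real (tent A B ((B - A) / (2 * real (Suc n))) x))
        \<longlonglongrightarrow> complex_of_real (indicator {A<..<B} x)"
      by (intro tendsto_of_real tent_tendsto_indicator AB)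
    then show "(\<lambda>n. cnj (d x) * complex_of_real (tent A B ((B - A) / (2 * real (Suc n))) x))
        \<longlonglongrightarrow> indicator {A<..<B} x *\<^sub>R cnj (d x)"
      unfolding scaleR_conv_of_real by (subst mult.commute) (rule tendsto_mult_left)
  qed
  show "AE x in lborel. norm (cnj (d x) * complex_of_real (tent A B ((B - A) / (2 * real (Suc n))) x))
      \<le> indicator {A..B} x * cmod (d x)" for n
  proof (intro AE_I2)
    fix x
    interpret tent_shape A B "(B - A) / (2 * real (Suc n))" using AB by (rule tent_shape_seq)
    show "norm (cnj (d x) * complex_of_real (tent A B ((B - A) / (2 * real (Suc n))) x)) \<le> indicator {A..B} x * cmod (d x)"
      using mult_left_mono[OF tent_le_indicator[of x] norm_ge_zero[of "d x"]] tent_bounds[of A B _ x]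
      by (simp add: norm_mult mult.commute)
  qed
qed

lemma AE_zero_if_L2_inner_tents_zero:
  assumes d: "L2 d"
    and zero: "\<And>A B \<delta>. tent_shape A B \<delta> \<Longrightarrow> 0 < A \<or> B < 0
      \<Longrightarrow> L2_inner d (\<lambda>x. complex_of_real (tent A B \<delta> x)) = 0"
  shows "AE x in lborel. d x = 0"
proof -
  have "AE x in lborel. cnj (d x) = 0"
  proof (rule AE_zero_if_interval_integrals_zero)
    show "set_integrable lborel {a..b} (\<lambda>x. cnj (d x))" for a b
      by (intro L2_set_integrable L2_cnj d)
    fix A B :: real assume AB: "A < B" and avoid0: "0 < A \<or> B < 0"
    have "L2_inner d (\<lambda>x. complex_of_real (tent A B ((B - A) / (2 * real (Suc n))) x)) = 0" for n
      by (intro zero tent_shape_seq AB avoid0)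
    with L2_inner_tents_tendsto[OF d AB] show "(LINT x:{A<..<B}|lborel. cnj (d x)) = 0"
      by (simp add: LIMSEQ_const_iff)
  qed
  then show ?thesis by simp
qed

lemma t_adj_graph_gauss_poly_odd:
  assumes a: "0 < a" and fg: "(f, g) \<in> t_adj_graph" and f: "AE x in lborel. f x = gauss_poly 1 a P x"
  shows "AE x in lborel. g x = gauss_poly 1 a (t_poly a P) x"
proof -
  have L2: "L2 f" "L2 g" and adj: "\<And>\<phi> k. (\<phi>, k) \<in> t_graph \<Longrightarrow> L2_inner f k = L2_inner g \<phi>"
    using fg by (auto simp: t_adj_graph_def)
  define E where "E = gauss_poly 1 a (t_poly a P)"
  have "AE x in lborel. g x - E x = 0"
  proof (rule AE_zero_if_L2_inner_tents_zero)
    show "L2 (\<lambda>x. g x - E x)" unfolding E_def by (intro L2_diff L2 L2_gauss_poly a)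
    fix A B \<delta> assume "tent_shape A B \<delta>" and avoid0: "0 < A \<or> B < 0"
    interpret tent_shape A B \<delta> by fact
    have "L2_inner g (\<lambda>x. complex_of_real (tent A B \<delta> x)) = L2_inner f (t_tent A B \<delta>)"
      using adj[OF tent_t_graph[OF avoid0]] by simp
    also have "\<dots> = L2_inner (gauss_poly 1 a P) (t_tent A B \<delta>)"
      using f by (intro L2_inner_cong_AE L2 L2_gauss_poly a L2_t_tent avoid0) auto
    also have "\<dots> = L2_inner E (\<lambda>x. complex_of_real (tent A B \<delta> x))"
      unfolding E_def by (rule L2_inner_gauss_poly_t_tent[OF a avoid0])
    finally show "L2_inner (\<lambda>x. g x - E x) (\<lambda>x. complex_of_real (tent A B \<delta> x)) = 0"
      unfolding E_def by (simp add: L2_inner_diff_left L2 L2_gauss_poly a L2_tent)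
  qed
  then show ?thesis by (simp add: E_def)
qed

section \<open>Moments of the partial sums of the series\<close>

lemma relpow_AE_eq_funpow:
  fixes T :: "(cfun \<times> cfun) set" and E :: "'p \<Rightarrow> cfun" and M :: "'p \<Rightarrow> 'p"
  assumes step: "\<And>f g Q. (f, g) \<in> T \<Longrightarrow> AE x in lborel. f x = E Q x
      \<Longrightarrow> AE x in lborel. g x = E (M Q) x"
    and f: "AE x in lborel. f x = E P x"
  shows "(f, g) \<in> T ^^ k \<Longrightarrow> AE x in lborel. g x = E ((M ^^ k) P) x"
proof (induction k arbitrary: g)
  case (Suc k)
  then obtain h where "(f, h) \<in> T ^^ k" "(h, g) \<in> T" by auto
  with Suc.IH show ?case using step by simp
qed (use f in simp)

lemma degree_t_poly_le: "degree P \<le> m \<Longrightarrow> degree (t_poly a P) \<le> m"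
  unfolding t_poly_def deriv_poly_def
  by (intro order.trans[OF degree_smult_le] degree_diff_le) (auto simp: degree_pderiv)

lemma coeff_t_poly_degree:
  assumes "degree P \<le> m"
  shows "coeff (t_poly a P) m = \<i> / complex_of_real a * coeff P m"
  using assms by (simp add: t_poly_def deriv_poly_def coeff_pderiv coeff_eq_0 field_simps)

lemma degree_t_poly_funpow_le: "degree P \<le> m \<Longrightarrow> degree ((t_poly a ^^ k) P) \<le> m"
  by (induction k) (auto intro: degree_t_poly_le)

lemma coeff_t_poly_funpow:
  "degree P \<le> m \<Longrightarrow> coeff ((t_poly a ^^ k) P) m = (\<i> / complex_of_real a) ^ k * coeff P m"
  by (induction k) (simp_all add: coeff_t_poly_degree degree_t_poly_funpow_le)

definition probe :: "nat \<Rightarrow> real \<Rightarrow> real \<Rightarrow> real \<Rightarrow> complex" where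
  "probe s a y x = complex_of_real ((if s = 0 then \<bar>x\<bar> else sgn x) * exp (x\<^sup>2 / (2 * a) - x\<^sup>2 / y))"

lemma L2_probe:
  assumes a: "0 < a" and y: "0 < y" "y < 2 * a"
  shows "L2 (probe s a y)"
proof -
  define c where "c = 1 / (2 / y - 1 / a)"
  have "1 / a < 2 / y" using a y by (simp add: field_simps)
  then have c: "0 < c" by (simp add: c_def)
  have [measurable]: "probe s a y \<in> borel_measurable lborel"
    unfolding probe_def by measurable
  define B where "B x = \<bar>x\<bar> ^ 0 * exp (- (x\<^sup>2) / c) + \<bar>x\<bar> ^ 2 * exp (- (x\<^sup>2) / c)" for x
  have bound: "(cmod (probe s a y x))\<^sup>2 \<le> B x" for x
  proof -
    have "(exp (x\<^sup>2 / (2 * a) - x\<^sup>2 / y))\<^sup>2 = exp (2 * (x\<^sup>2 / (2 * a) - x\<^sup>2 / y))"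
      by (simp add: power2_eq_square exp_add[symmetric])
    also have "2 * (x\<^sup>2 / (2 * a) - x\<^sup>2 / y) = - (x\<^sup>2) / c"
      using a y by (simp add: c_def field_simps)
    finally have "(cmod (probe s a y x))\<^sup>2 = (if s = 0 then \<bar>x\<bar> else sgn x)\<^sup>2 * exp (- (x\<^sup>2) / c)"
      unfolding probe_def norm_of_real power2_abs power_mult_distrib by simp
    also have "\<dots> \<le> (1 + \<bar>x\<bar> ^ 2) * exp (- (x\<^sup>2) / c)"
      by (intro mult_right_mono) (auto simp: sgn_if)
    finally show ?thesis by (simp add: B_def algebra_simps)
  qed
  have "integrable lborel (\<lambda>x. (cmod (probe s a y x))\<^sup>2)"
  proof (rule Bochner_Integration.integrable_bound)
    show "integrable lborel B"
      unfolding B_def by (intro Bochner_Integration.integrable_add integrable_gauss_moment c)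
    show "AE x in lborel. norm ((cmod (probe s a y x))\<^sup>2) \<le> norm (B x)"
    proof (rule AE_I2)
      fix x
      have "(cmod (probe s a y x))\<^sup>2 \<le> norm (B x)"
        by (rule order.trans[OF bound]) (simp only: real_norm_def abs_ge_self)
      then show "norm ((cmod (probe s a y x))\<^sup>2) \<le> norm (B x)" by simp
    qed
  qed measurable
  then show ?thesis by (simp add: L2_def)
qed

lemma L2_inner_probe_gauss_poly:
  assumes y: "0 < y" and s: "s \<le> 1" and Q: "degree Q \<le> m"
  shows "L2_inner (probe s a y) (gauss_poly s a Q) = (\<Sum>j\<le>m. coeff Q j * complex_of_real (fact j * y ^ (j + 1)))"
proof -
  have sign: "(if s = 0 then \<bar>x\<bar> else sgn x) * x ^ (2 * j + s) = \<bar>x\<bar> ^ (2 * j + 1)" for x :: real and j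
  proof -
    have "sgn x * x = \<bar>x\<bar>" by (auto simp: sgn_if)
    moreover have "x ^ (2 * j) = \<bar>x\<bar> ^ (2 * j)" by (simp add: power_even_abs)
    ultimately show ?thesis using s by (cases s) (auto simp: power_add mult_ac)
  qed
  have exp: "exp (x\<^sup>2 / (2 * a) - x\<^sup>2 / y) * exp (- (x\<^sup>2) / (2 * a)) = exp (- (x\<^sup>2) / y)" for x
    by (simp add: exp_add[symmetric])
  have "cnj (probe s a y x) * (coeff Q j * complex_of_real (x ^ (2 * j + s) * exp (- (x\<^sup>2) / (2 * a))))
      = coeff Q j * complex_of_real ((if s = 0 then \<bar>x\<bar> else sgn x) * x ^ (2 * j + s)
          * (exp (x\<^sup>2 / (2 * a) - x\<^sup>2 / y) * exp (- (x\<^sup>2) / (2 * a))))" for x j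
    by (simp add: probe_def mult_ac)
  then have "cnj (probe s a y x) * gauss_poly s a Q x
      = (\<Sum>j\<le>m. coeff Q j * complex_of_real (\<bar>x\<bar> ^ (2 * j + 1) * exp (- (x\<^sup>2) / y)))" for x
    unfolding gauss_poly_eq_sum[OF Q] sum_distrib_left by (simp only: sign exp)
  moreover have "has_bochner_integral lborel
      (\<lambda>x. \<Sum>j\<le>m. coeff Q j * complex_of_real (\<bar>x\<bar> ^ (2 * j + 1) * exp (- (x\<^sup>2) / y)))
      (\<Sum>j\<le>m. coeff Q j * complex_of_real (fact j * y ^ (j + 1)))"
    by (intro has_bochner_integral_sum has_bochner_integral_mult_right has_bochner_integral_of_real
        has_bochner_integral_gauss_odd_moment y)
  ultimately show ?thesis
    unfolding L2_inner_def by (simp add: has_bochner_integral_integral_eq)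
qed

primrec qdiff :: "real \<Rightarrow> nat \<Rightarrow> (real \<Rightarrow> complex) \<Rightarrow> real \<Rightarrow> complex" where
  "qdiff q 0 F = F"
| "qdiff q (Suc k) F = (\<lambda>y. qdiff q k F (q * y) - complex_of_real (q ^ k) * qdiff q k F y)"

lemma qdiff_monomials:
  "qdiff q k (\<lambda>y. \<Sum>j\<le>m. z j * complex_of_real (y ^ j)) y
     = (\<Sum>j\<le>m. z j * complex_of_real ((\<Prod>i<k. q ^ j - q ^ i) * y ^ j))"
proof (induction k arbitrary: y)
  case (Suc k)
  have "z j * complex_of_real ((\<Prod>i<k. q ^ j - q ^ i) * (q * y) ^ j)
      - complex_of_real (q ^ k) * (z j * complex_of_real ((\<Prod>i<k. q ^ j - q ^ i) * y ^ j))
      = z j * complex_of_real ((\<Prod>i<Suc k. q ^ j - q ^ i) * y ^ j)" for j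
  proof -
    have r: "(\<Prod>i<k. q ^ j - q ^ i) * (q * y) ^ j - q ^ k * ((\<Prod>i<k. q ^ j - q ^ i) * y ^ j)
        = (\<Prod>i<Suc k. q ^ j - q ^ i) * y ^ j"
      by (simp add: power_mult_distrib algebra_simps)
    have "z j * complex_of_real ((\<Prod>i<k. q ^ j - q ^ i) * (q * y) ^ j)
        - complex_of_real (q ^ k) * (z j * complex_of_real ((\<Prod>i<k. q ^ j - q ^ i) * y ^ j))
        = z j * complex_of_real ((\<Prod>i<k. q ^ j - q ^ i) * (q * y) ^ j - q ^ k * ((\<Prod>i<k. q ^ j - q ^ i) * y ^ j))"
      by (simp only: of_real_diff of_real_mult) (simp add: algebra_simps)
    then show ?thesis
      by (simp only: r)
  qed
  then show ?case
    by (simp only: qdiff.simps Suc.IH sum_distrib_left sum_subtractf[symmetric])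
qed simp

lemma qdiff_convergent:
  assumes q: "0 < q" "q \<le> 1" and conv: "\<And>y. 0 < y \<Longrightarrow> y < Y \<Longrightarrow> convergent (\<lambda>N. F N y)"
  shows "0 < y \<Longrightarrow> y < Y \<Longrightarrow> convergent (\<lambda>N. qdiff q k (F N) y)"
proof (induction k arbitrary: y)
  case (Suc k)
  have "q * y \<le> y"
    using Suc.prems q by (intro mult_left_le_one_le) auto
  then have "0 < q * y" "q * y < Y"
    using Suc.prems q by (simp, linarith)
  then have "convergent (\<lambda>N. qdiff q k (F N) (q * y))" and c: "convergent (\<lambda>N. qdiff q k (F N) y)"
    using Suc.IH Suc.prems by blast+
  then show ?case
    by (simp, intro convergent_diff convergent_mult[OF convergent_const c])
qed (use conv in simp)

text \<open>Evaluating the q-difference of order m at one point isolates the coefficient of y^m.\<close>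
lemma convergent_top_coeff:
  fixes z :: "nat \<Rightarrow> nat \<Rightarrow> complex"
  assumes Y: "0 < Y"
    and conv: "\<And>y. 0 < y \<Longrightarrow> y < Y \<Longrightarrow> convergent (\<lambda>N. \<Sum>j\<le>m. z N j * complex_of_real (y ^ j))"
  shows "convergent (\<lambda>N. z N m)"
proof -
  define q :: real where "q = 1 / 2"
  define c where "c = complex_of_real ((\<Prod>i<m. q ^ m - q ^ i) * (Y / 2) ^ m)"
  have q: "0 < q" "q \<le> 1" by (auto simp: q_def)
  have "qdiff q m (\<lambda>y. \<Sum>j\<le>m. z N j * complex_of_real (y ^ j)) (Y / 2) = z N m * c" for N
  proof -
    have "(\<Prod>i<m. q ^ j - q ^ i) = 0" if "j < m" for j
      using that by (intro prod_zero) (auto intro!: bexI[of _ j])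
    then have "(\<Sum>j<m. z N j * complex_of_real ((\<Prod>i<m. q ^ j - q ^ i) * (Y / 2) ^ j)) = 0"
      by (intro sum.neutral) auto
    then have "(\<Sum>j\<le>m. z N j * complex_of_real ((\<Prod>i<m. q ^ j - q ^ i) * (Y / 2) ^ j)) = z N m * c"
      unfolding lessThan_Suc_atMost[symmetric] sum.lessThan_Suc by (simp only: add_0_left c_def)
    then show ?thesis
      by (simp only: qdiff_monomials)
  qed
  moreover have "convergent (\<lambda>N. qdiff q m (\<lambda>y. \<Sum>j\<le>m. z N j * complex_of_real (y ^ j)) (Y / 2))"
    using Y by (intro qdiff_convergent[OF q conv]) auto
  moreover have "c \<noteq> 0"
  proof -
    have "q ^ m < q ^ i" if "i < m" for i
      using that by (intro power_strict_decreasing) (auto simp: q_def)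
    then have "(\<Prod>i<m. q ^ m - q ^ i) \<noteq> 0"
      by (auto simp: prod_zero_iff dest: less_imp_neq)
    then show ?thesis
      unfolding c_def of_real_eq_0_iff using Y by simp
  qed
  ultimately show ?thesis
    by (simp add: convergent_mult_const_right_iff)
qed

lemma not_convergent_odd_harmonic: "\<not> convergent (\<lambda>N. \<Sum>n\<le>N. complex_of_real (1 / real (2 * n + 1)))"
proof
  assume "convergent (\<lambda>N. \<Sum>n\<le>N. complex_of_real (1 / real (2 * n + 1)))"
  then obtain L where "(\<lambda>N. \<Sum>n\<le>N. complex_of_real (1 / real (2 * n + 1))) \<longlonglongrightarrow> L"
    unfolding convergent_def by blast
  then have "(\<lambda>N. Re (\<Sum>n\<le>N. complex_of_real (1 / real (2 * n + 1)))) \<longlonglongrightarrow> Re L"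
    by (rule tendsto_Re)
  then have "(\<lambda>N. \<Sum>n\<le>N. 1 / real (2 * n + 1)) \<longlonglongrightarrow> Re L"
    by (simp only: Re_sum Re_complex_of_real)
  then have "summable (\<lambda>n. 1 / real (2 * n + 1))"
    unfolding summable_iff_convergent' convergent_def by blast
  then have "summable (\<lambda>n. 1 / (2 * real (Suc n)))"
    by (rule summable_comparison_test'[where N=0]) (auto simp: field_simps)
  then have "summable (\<lambda>n. 2 * (1 / (2 * real (Suc n))))"
    by (rule summable_mult)
  moreover have "(\<lambda>n. 2 * (1 / (2 * real (Suc n)))) = (\<lambda>n. inverse (real (Suc n)))"
    by (rule ext) (simp add: field_simps del: of_nat_Suc)
  ultimately have "summable (\<lambda>n. inverse (real (Suc n)))"
    by simp
  then show False
    using not_summable_harmonic[where 'a=real] summable_Suc_iff[of "\<lambda>n. inverse (real n)"] by simp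
qed

lemma convergent_coeff_if_L2_tendsto:
  assumes a: "0 < a" and s: "s \<le> 1" and R: "\<And>N. degree (R N) \<le> m"
    and S: "\<And>N. L2 (S N)" "L2 l" "L2_tendsto S l"
    and SR: "\<And>N. AE x in lborel. S N x = gauss_poly s a (R N) x"
  shows "convergent (\<lambda>N. coeff (R N) m)"
proof -
  have "convergent (\<lambda>N. \<Sum>j\<le>m. coeff (R N) j * complex_of_real (fact j) * complex_of_real (y ^ j))"
    if y: "0 < y" "y < 2 * a" for y
  proof -
    have "L2_inner (probe s a y) (S N)
        = complex_of_real y * (\<Sum>j\<le>m. coeff (R N) j * complex_of_real (fact j) * complex_of_real (y ^ j))" for N
    proof -
      have "L2_inner (probe s a y) (S N) = L2_inner (probe s a y) (gauss_poly s a (R N))"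
        using L2_inner_cong_AE[OF L2_probe[OF a y] L2_probe[OF a y] S(1) L2_gauss_poly[OF a] _ SR] by simp
      also have "\<dots> = (\<Sum>j\<le>m. coeff (R N) j * complex_of_real (fact j * y ^ (j + 1)))"
        by (rule L2_inner_probe_gauss_poly[OF y(1) s R])
      finally show ?thesis
        by (simp add: sum_distrib_left mult_ac)
    qed
    moreover have "convergent (\<lambda>N. L2_inner (probe s a y) (S N))"
      using L2_inner_tendsto[OF L2_probe[OF a y] S] by (auto simp: convergent_def)
    ultimately show ?thesis
      using y by (simp add: convergent_mult_const_iff)
  qed
  then have "convergent (\<lambda>N. coeff (R N) m * complex_of_real (fact m))"
    using convergent_top_coeff[where Y="2 * a" and z="\<lambda>N j. coeff (R N) j * complex_of_real (fact j)"] a by simp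
  then show ?thesis
    by (simp add: convergent_mult_const_right_iff)
qed

text \<open>The polynomial part of the N-th partial sum of the series defining S_eps.\<close>
definition S_poly :: "real \<Rightarrow> complex poly \<Rightarrow> nat \<Rightarrow> complex poly" where
  "S_poly \<epsilon> P N = (\<Sum>n\<le>N. smult (complex_of_real ((-1) ^ n / real (2 * n + 1) * sqrt \<epsilon> ^ (2 * n + 1)))
     ((t_poly (sqrt \<epsilon>) ^^ (2 * n + 1)) P))"

lemma degree_S_poly_le: "degree (S_poly \<epsilon> P N) \<le> degree P"
  unfolding S_poly_def
  by (intro degree_sum_le order.trans[OF degree_smult_le] degree_t_poly_funpow_le) simp_all

lemma coeff_S_poly_degree:
  assumes "0 < \<epsilon>"
  shows "coeff (S_poly \<epsilon> P N) (degree P)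
    = \<i> * lead_coeff P * (\<Sum>n\<le>N. complex_of_real (1 / real (2 * n + 1)))"
proof -
  have c: "complex_of_real ((-1) ^ n / real (2 * n + 1) * sqrt \<epsilon> ^ (2 * n + 1))
      * (\<i> / complex_of_real (sqrt \<epsilon>)) ^ (2 * n + 1) = \<i> * complex_of_real (1 / real (2 * n + 1))" for n
  proof -
    have "\<i> ^ (2 * n + 1) = (-1) ^ n * \<i>" by (simp add: power_mult power_add)
    moreover have "((-1) ^ n * (-1) ^ n :: complex) = 1" by (simp flip: power_add)
    ultimately show ?thesis
      using assms by (simp add: power_divide field_simps)
  qed
  have "coeff (smult (complex_of_real ((-1) ^ n / real (2 * n + 1) * sqrt \<epsilon> ^ (2 * n + 1)))
      ((t_poly (sqrt \<epsilon>) ^^ (2 * n + 1)) P)) (degree P)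
      = \<i> * lead_coeff P * complex_of_real (1 / real (2 * n + 1))" for n
    unfolding coeff_smult coeff_t_poly_funpow[OF order.refl] mult.assoc[symmetric] c by (simp only: ac_simps)
  then show ?thesis
    unfolding S_poly_def coeff_sum by (simp only: sum_distrib_left)
qed

definition t_poly_action :: "(cfun \<times> cfun) set \<Rightarrow> nat \<Rightarrow> real \<Rightarrow> bool" where
  "t_poly_action T s a \<longleftrightarrow> (\<forall>f g. (f, g) \<in> T \<longrightarrow> L2 g \<and>
     (\<forall>Q. (AE x in lborel. f x = gauss_poly s a Q x) \<longrightarrow> (AE x in lborel. g x = gauss_poly s a (t_poly a Q) x)))"

lemma t_poly_action_t_graph:
  assumes "0 < a"
  shows "t_poly_action t_graph 0 a"
  unfolding t_poly_action_def
proof (intro allI impI conjI)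
  fix f g Q assume fg: "(f, g) \<in> t_graph"
  then show "L2 g" by (auto simp: t_graph_def qinv_graph_def)
  show "AE x in lborel. g x = gauss_poly 0 a (t_poly a Q) x" if "AE x in lborel. f x = gauss_poly 0 a Q x"
    using t_graph_gauss_poly_even[OF assms fg that] .
qed

lemma t_poly_action_t_adj_graph:
  assumes "0 < a"
  shows "t_poly_action t_adj_graph 1 a"
  unfolding t_poly_action_def
proof (intro allI impI conjI)
  fix f g Q assume fg: "(f, g) \<in> t_adj_graph"
  then show "L2 g" by (simp add: t_adj_graph_def)
  show "AE x in lborel. g x = gauss_poly 1 a (t_poly a Q) x" if "AE x in lborel. f x = gauss_poly 1 a Q x"
    using t_adj_graph_gauss_poly_odd[OF assms fg that] .
qed

lemma S_dom_gauss_poly_partial_sums: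
  assumes T: "t_poly_action T s (sqrt \<epsilon>)" and dom: "gauss_poly s (sqrt \<epsilon>) P \<in> S_dom T H \<epsilon>"
  shows "\<exists>S l. (\<forall>N. L2 (S N)) \<and> L2 l \<and> L2_tendsto S l
    \<and> (\<forall>N. AE x in lborel. S N x = gauss_poly s (sqrt \<epsilon>) (S_poly \<epsilon> P N) x)"
proof -
  define c where "c n = complex_of_real ((-1) ^ n / real (2 * n + 1) * sqrt \<epsilon> ^ (2 * n + 1))" for n :: nat
  have step: "\<And>f g Q. (f, g) \<in> T \<Longrightarrow> AE x in lborel. f x = gauss_poly s (sqrt \<epsilon>) Q x
      \<Longrightarrow> AE x in lborel. g x = gauss_poly s (sqrt \<epsilon>) (t_poly (sqrt \<epsilon>) Q) x"
    and range: "\<And>f g. (f, g) \<in> T \<Longrightarrow> L2 g"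
    using T unfolding t_poly_action_def by blast+
  have "\<exists>v. (\<forall>n. (gauss_poly s (sqrt \<epsilon>) P, v n) \<in> T ^^ (2 * n + 1)) \<and>
      (\<exists>l. L2 l \<and> L2_tendsto (\<lambda>N x. \<Sum>n\<le>N. c n * v n x) l)"
    using dom unfolding S_dom_def c_def by (simp only: mem_Collect_eq)
  then obtain v l where v: "\<And>n. (gauss_poly s (sqrt \<epsilon>) P, v n) \<in> T ^^ (2 * n + 1)" and l: "L2 l"
    and lim: "L2_tendsto (\<lambda>N x. \<Sum>n\<le>N. c n * v n x) l"
    by blast
  have "AE x in lborel. v n x = gauss_poly s (sqrt \<epsilon>) ((t_poly (sqrt \<epsilon>) ^^ (2 * n + 1)) P) x" for n
    by (rule relpow_AE_eq_funpow[where T=T and E="gauss_poly s (sqrt \<epsilon>)" and M="t_poly (sqrt \<epsilon>)", OF step _ v])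
       simp_all
  then have "AE x in lborel. \<forall>n. v n x = gauss_poly s (sqrt \<epsilon>) ((t_poly (sqrt \<epsilon>) ^^ (2 * n + 1)) P) x"
    by (simp add: AE_all_countable)
  then have ae: "AE x in lborel. (\<Sum>n\<le>N. c n * v n x) = gauss_poly s (sqrt \<epsilon>) (S_poly \<epsilon> P N) x" for N
    by eventually_elim (simp add: S_poly_def gauss_poly_sum c_def)
  have "L2 (v n)" for n
    using v[of n] range by (auto elim: relpow_Suc_E simp del: relpow.simps)
  then have "L2 (\<lambda>x. \<Sum>n\<le>N. c n * v n x)" for N
    by (intro L2_sum L2_mult_left)
  with l lim ae show ?thesis
    by (intro exI[of _ "\<lambda>N x. \<Sum>n\<le>N. c n * v n x"] exI[of _ l] conjI allI)
qed

lemma gauss_poly_in_S_dom_imp_zero: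
  assumes \<epsilon>: "0 < \<epsilon>" and s: "s \<le> 1" and T: "t_poly_action T s (sqrt \<epsilon>)"
    and dom: "gauss_poly s (sqrt \<epsilon>) P \<in> S_dom T H \<epsilon>"
  shows "P = 0"
proof (rule ccontr)
  assume "P \<noteq> 0"
  obtain S l where S: "\<forall>N. L2 (S N)" "L2 l" "L2_tendsto S l"
    "\<forall>N. AE x in lborel. S N x = gauss_poly s (sqrt \<epsilon>) (S_poly \<epsilon> P N) x"
    using S_dom_gauss_poly_partial_sums[OF T dom] by blast
  have "0 < sqrt \<epsilon>" using \<epsilon> by simp
  then have "convergent (\<lambda>N. coeff (S_poly \<epsilon> P N) (degree P))"
    using S by (intro convergent_coeff_if_L2_tendsto[OF \<open>0 < sqrt \<epsilon>\<close> s degree_S_poly_le]) auto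
  then have "convergent (\<lambda>N. (\<i> * lead_coeff P) * (\<Sum>n\<le>N. complex_of_real (1 / real (2 * n + 1))))"
    by (simp only: coeff_S_poly_degree[OF \<epsilon>])
  then show False
    using \<open>P \<noteq> 0\<close> not_convergent_odd_harmonic by (simp add: convergent_mult_const_iff)
qed

section \<open>Parity in K_eps\<close>

lemma poly_parity_if_AE:
  fixes p :: "complex poly"
  assumes "AE x in lborel. poly p (- complex_of_real x) = \<sigma> * poly p (complex_of_real x)"
  shows "pcompose p [:0, -1:] = smult \<sigma> p"
proof (rule ccontr)
  define q where "q = pcompose p [:0, -1:] - smult \<sigma> p"
  define Z where "Z = {x::real. poly q (complex_of_real x) = 0}"
  assume "pcompose p [:0, -1:] \<noteq> smult \<sigma> p"
  then have "finite {z. poly q z = 0}"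
    by (intro poly_roots_finite) (simp add: q_def)
  then have "finite (complex_of_real -` {z. poly q z = 0})"
    by (rule finite_vimageI) (rule inj_of_real)
  then have "finite Z" by (simp add: Z_def vimage_def)
  have "poly q (complex_of_real x) = poly p (- complex_of_real x) - \<sigma> * poly p (complex_of_real x)" for x
    by (simp add: q_def poly_pcompose)
  then have "AE x in lborel. x \<in> Z"
    using assms by (auto simp: Z_def elim!: AE_mp intro!: AE_I2)
  moreover have "AE x in lborel. x \<notin> Z"
    using finite_imp_null_set_lborel[OF \<open>finite Z\<close>] by (rule AE_not_in)
  ultimately have "AE x::real in lborel. False"
    by eventually_elim simp
  then have "emeasure lborel (UNIV :: real set) = 0"
    by (subst (asm) AE_iff_measurable[of UNIV]) auto
  then show False by simp
qed

lemma poly_even_form: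
  fixes p :: "'a::comm_ring_1 poly"
  assumes "\<And>n. odd n \<Longrightarrow> coeff p n = 0"
  shows "poly p z = poly (\<Sum>j\<le>degree p. monom (coeff p (2 * j)) j) (z\<^sup>2)"
proof -
  have "poly (\<Sum>j\<le>degree p. monom (coeff p (2 * j)) j) (z\<^sup>2) = (\<Sum>j\<le>degree p. coeff p (2 * j) * z ^ (2 * j))"
    by (simp add: poly_sum poly_monom power_mult)
  also have "\<dots> = (\<Sum>n\<in>(\<lambda>j. 2 * j) ` {..degree p}. coeff p n * z ^ n)"
    by (simp add: sum.reindex inj_on_def)
  also have "\<dots> = (\<Sum>n\<le>2 * degree p. coeff p n * z ^ n)"
  proof (rule sum.mono_neutral_left)
    show "\<forall>n\<in>{..2 * degree p} - (\<lambda>j. 2 * j) ` {..degree p}. coeff p n * z ^ n = 0"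
    proof
      fix n assume "n \<in> {..2 * degree p} - (\<lambda>j. 2 * j) ` {..degree p}"
      then have "odd n" by (auto elim!: evenE)
      then show "coeff p n * z ^ n = 0" using assms by simp
    qed
  qed auto
  also have "\<dots> = poly p z"
    unfolding poly_altdef by (intro sum.mono_neutral_right) (auto simp: coeff_eq_0)
  finally show ?thesis ..
qed

lemma poly_parity_form:
  fixes p :: "'a::comm_ring_1 poly"
  assumes "s \<le> 1" and "\<And>n. odd (n + s) \<Longrightarrow> coeff p n = 0"
  shows "\<exists>P. \<forall>z. poly p z = z ^ s * poly P (z\<^sup>2)"
proof (cases s)
  case 0
  then show ?thesis using poly_even_form[of p] assms(2) by auto
next
  case (Suc s')
  then have s: "s = 1" using assms(1) by simp
  obtain a q where p: "p = pCons a q" by (cases p)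
  have "a = 0" using assms(2)[of 0] by (simp add: p s)
  moreover have "odd n \<Longrightarrow> coeff q n = 0" for n
    using assms(2)[of "Suc n"] by (simp add: p s)
  ultimately show ?thesis
    using poly_even_form[of q] by (auto simp: p s)
qed

lemma K_space_eq_poly_times_gaussian:
  assumes "f \<in> K_space \<epsilon>"
  shows "\<exists>p. f = (\<lambda>x. poly p (complex_of_real x) * complex_of_real (exp (- (x\<^sup>2) / (2 * sqrt \<epsilon>))))"
proof -
  obtain N c where f: "f = (\<lambda>x. \<Sum>n<N. c n * complex_of_real (x ^ n * exp (- (x\<^sup>2) / (2 * sqrt \<epsilon>))))"
    using assms by (auto simp: K_space_def)
  show ?thesis
    by (rule exI[of _ "\<Sum>n<N. monom (c n) n"]) (simp add: f poly_sum poly_monom sum_distrib_right mult_ac)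
qed

lemma K_space_parity:
  assumes f: "f \<in> K_space \<epsilon>" and s: "s \<le> 1" and parity: "AE x in lborel. f (- x) = (-1) ^ s * f x"
  shows "\<exists>P. f = gauss_poly s (sqrt \<epsilon>) P"
proof -
  obtain p where fp: "f = (\<lambda>x. poly p (complex_of_real x) * complex_of_real (exp (- (x\<^sup>2) / (2 * sqrt \<epsilon>))))"
    using K_space_eq_poly_times_gaussian[OF f] by blast
  have "AE x in lborel. poly p (- complex_of_real x) = (-1) ^ s * poly p (complex_of_real x)"
    using parity by eventually_elim (simp add: fp)
  then have "pcompose p [:0, -1:] = smult ((-1) ^ s) p"
    by (rule poly_parity_if_AE)
  then have "coeff p n = 0" if "odd (n + s)" for n
  proof -
    have "(-1) ^ n * coeff p n = (-1) ^ s * coeff p n"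
      using arg_cong[where f="\<lambda>p. coeff p n", OF \<open>pcompose p [:0, -1:] = _\<close>]
      by (simp add: coeff_pcompose_linear)
    moreover have "(-1 :: complex) ^ n = - ((-1) ^ s)"
      using that s by (cases "s = 0") (auto simp: le_Suc_eq)
    ultimately show ?thesis by simp
  qed
  then obtain P where P: "\<And>z. poly p z = z ^ s * poly P (z\<^sup>2)"
    using poly_parity_form[OF s] by blast
  have "f = gauss_poly s (sqrt \<epsilon>) P"
    by (simp add: fp gauss_poly_def P fun_eq_iff)
  then show ?thesis ..
qed

lemma zero_in_S_dom:
  assumes "((\<lambda>x. 0), (\<lambda>x. 0)) \<in> T" "H (\<lambda>x. 0)"
  shows "(\<lambda>x. 0) \<in> S_dom T H \<epsilon>"
proof -
  have "((\<lambda>x. 0), (\<lambda>x. 0)) \<in> T ^^ k" for k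
    using assms(1) by (induction k) auto
  then show ?thesis
    unfolding S_dom_def mem_Collect_eq
    by (intro conjI assms(2) exI[of _ "\<lambda>n x. 0"] allI exI[of _ "\<lambda>x. 0"])
       (simp_all add: L2_tendsto_def del: relpow.simps)
qed

lemma zero_t_graph: "((\<lambda>x. 0), (\<lambda>x. 0)) \<in> t_graph"
proof -
  have "((\<lambda>x. 0), (\<lambda>x. 0)) \<in> p_graph"
    unfolding p_graph_def by (auto intro!: exI[of _ "\<lambda>x. 0"])
  moreover have "((\<lambda>x. 0), (\<lambda>x. 0)) \<in> qinv_graph"
    by (simp add: qinv_graph_def)
  ultimately show ?thesis unfolding t_graph_def by blast
qed

lemma zero_t_adj_graph: "((\<lambda>x. 0), (\<lambda>x. 0)) \<in> t_adj_graph"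
  by (simp add: t_adj_graph_def L2_inner_def)

lemma zero_in_K_space: "(\<lambda>x. 0) \<in> K_space \<epsilon>"
  unfolding K_space_def by (intro CollectI exI[of _ 0]) simp

lemma K_space_Int_S_dom:
  assumes \<epsilon>: "0 < \<epsilon>" and s: "s \<le> 1" and T: "t_poly_action T s (sqrt \<epsilon>)"
    and zero: "((\<lambda>x. 0), (\<lambda>x. 0)) \<in> T" "H (\<lambda>x. 0)"
    and parity: "\<And>f. H f \<Longrightarrow> AE x in lborel. f (- x) = (-1) ^ s * f x"
  shows "K_space \<epsilon> \<inter> S_dom T H \<epsilon> = {\<lambda>x. 0}"
proof
  show "{\<lambda>x. 0} \<subseteq> K_space \<epsilon> \<inter> S_dom T H \<epsilon>"
    using zero_in_K_space zero_in_S_dom[where T=T and H=H and \<epsilon>=\<epsilon>, OF zero] by auto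
  show "K_space \<epsilon> \<inter> S_dom T H \<epsilon> \<subseteq> {\<lambda>x. 0}"
  proof
    fix f assume f: "f \<in> K_space \<epsilon> \<inter> S_dom T H \<epsilon>"
    then have "H f" by (simp add: S_dom_def)
    then obtain P where P: "f = gauss_poly s (sqrt \<epsilon>) P"
      using K_space_parity[OF _ s parity] f by blast
    then have "P = 0"
      using f by (intro gauss_poly_in_S_dom_imp_zero[OF \<epsilon> s T, where H=H]) simp
    then show "f \<in> {\<lambda>x. 0}" by (simp add: P)
  qed
qed

theorem theorem3p9:
  fixes \<epsilon> :: real
  assumes "0 < \<epsilon>" and "\<epsilon> \<le> 1"
  shows "K_space \<epsilon> \<inter> S_dom t_graph L2_even \<epsilon> = {(\<lambda>x. 0)}
       \<and> K_space \<epsilon> \<inter> S_dom t_adj_graph L2_odd \<epsilon> = {(\<lambda>x. 0)}"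
proof
  have a: "0 < sqrt \<epsilon>" using assms(1) by simp
  show "K_space \<epsilon> \<inter> S_dom t_graph L2_even \<epsilon> = {(\<lambda>x. 0)}"
    by (rule K_space_Int_S_dom[OF assms(1) _ t_poly_action_t_graph[OF a] zero_t_graph])
       (auto simp: L2_even_def)
  show "K_space \<epsilon> \<inter> S_dom t_adj_graph L2_odd \<epsilon> = {(\<lambda>x. 0)}"
    by (rule K_space_Int_S_dom[OF assms(1) _ t_poly_action_t_adj_graph[OF a] zero_t_adj_graph])
       (auto simp: L2_odd_def)
qed

end
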